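(* Let $\rho>0$, $b>\frac12$, $b'<-\frac14$ and $s\ge3b$. Let $p\in\mathbb{N}$ and let $u_1,\dots,u_{p+1},v_1,\dots,v_{p+1}\in X_{\rho,s,b}$. Then there are constants $C,c$ such that $$\Big\|\partial_x\Big(\prod_{i=1}^pu_i\prod_{j=1}^{p+1}v_j\Big)\Big\|_{X_{\rho,s,b'}}\le C\prod_{i=1}^p\|u_i\|_{X_{s,b}}\prod_{j=1}^{p+1}\|v_j\|_{X_{s,b}}+c\prod_{i=1}^p\|u_i\|_{X_{\rho,s,b}}\prod_{j=1}^{p+1}\|v_j\|_{X_{\rho,s,b}},$$ $$\Big\|\partial_x\Big(\prod_{i=1}^{p+1}u_i\prod_{j=1}^{p}v_j\Big)\Big\|_{X_{\rho,s,b'}}\le C\prod_{i=1}^{p+1}\|u_i\|_{X_{s,b}}\prod_{j=1}^{p}\|v_j\|_{X_{s,b}}+c\prod_{i=1}^{p+1}\|u_i\|_{X_{\rho,s,b}}\prod_{j=1}^{p}\|v_j\|_{X_{\rho,s,b}}.$$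
   Context: For a function $u(x,t)$, $\widehat{u}(\zeta,\eta)$ denotes its space-time Fourier transform. For $\rho\ge0$, $s,b\in\mathbb{R}$, $\|u\|_{X_{\rho,s,b}}=\big\|e^{\rho(1+|\zeta|)}(1+|\zeta|)^s(1+|\eta-\zeta^3|)^b\widehat{u}(\zeta,\eta)\big\|_{L^2_{\zeta,\eta}}$, and $X_{s,b}=X_{0,s,b}$ is the classical Bourgain space with norm $\|u\|_{X_{s,b}}=\big\|(1+|\zeta|)^s(1+|\eta-\zeta^3|)^b\widehat{u}(\zeta,\eta)\big\|_{L^2_{\zeta,\eta}}$. *)

theory Defs
  imports "HOL-Analysis.Analysis"
begin

(* Everything is expressed on the Fourier side: a space-time function u(x,t)
   is represented by its space-time Fourier transform
     uh(zeta,eta) = \<integral>\<integral> exp(-i(x zeta + t eta)) u(x,t) dx dt,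
   a function  real \<times> real \<Rightarrow> complex  of (zeta, eta). *)

definition bweight :: "real \<Rightarrow> real \<Rightarrow> real \<Rightarrow> real \<times> real \<Rightarrow> real" where
  "bweight \<rho> s b z =
     exp (\<rho> * (1 + \<bar>fst z\<bar>)) * (1 + \<bar>fst z\<bar>) powr s * (1 + \<bar>snd z - fst z ^ 3\<bar>) powr b"

definition ennsqrt :: "ennreal \<Rightarrow> ennreal" where
  "ennsqrt x = (if x = top then top else ennreal (sqrt (enn2real x)))"

text \<open>Norm of X_{rho,s,b}, given the Fourier transform uh of u (possibly infinite).
  X_{s,b} is the case rho = 0.\<close>
definition Xnorm :: "real \<Rightarrow> real \<Rightarrow> real \<Rightarrow> (real \<times> real \<Rightarrow> complex) \<Rightarrow> ennreal" where
  "Xnorm \<rho> s b uh = ennsqrt (\<integral>\<^sup>+ z. ennreal ((bweight \<rho> s b z * cmod (uh z))\<^sup>2) \<partial>lborel)"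

definition inX :: "real \<Rightarrow> real \<Rightarrow> real \<Rightarrow> (real \<times> real \<Rightarrow> complex) \<Rightarrow> bool" where
  "inX \<rho> s b uh \<longleftrightarrow> uh \<in> borel_measurable lborel \<and> Xnorm \<rho> s b uh < top"

text \<open>Fourier transform of a product:  (u v)^ = (2 pi)^(-2) (uh * vh).\<close>
definition fconv :: "(real \<times> real \<Rightarrow> complex) \<Rightarrow> (real \<times> real \<Rightarrow> complex) \<Rightarrow> real \<times> real \<Rightarrow> complex" where
  "fconv f g = (\<lambda>z. complex_of_real (1 / (2 * pi)\<^sup>2) * (LINT w|lborel. f w * g (z - w)))"

fun fprod :: "(real \<times> real \<Rightarrow> complex) list \<Rightarrow> real \<times> real \<Rightarrow> complex" where
  "fprod [] = (\<lambda>_. 0)"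
| "fprod [f] = f"
| "fprod (f # fs) = fconv f (fprod fs)"

text \<open>Fourier transform of the x-derivative: (d_x u)^ = i zeta uh.\<close>
definition dx_hat :: "(real \<times> real \<Rightarrow> complex) \<Rightarrow> real \<times> real \<Rightarrow> complex" where
  "dx_hat f = (\<lambda>z. \<i> * complex_of_real (fst z) * f z)"

end

theory Submission
  imports Defs "HOL-Real_Asymp.Real_Asymp"
begin

(* Passing to absolute values of the Fourier transforms, the product becomes an iterated
   convolution F_1 * ... * F_k of k = 2p + 1 >= 3 nonnegative functions, and the analytic weight
   exp(\<rho> (1 + |\<xi>|)) is submultiplicative, so it can be moved onto the factors. As b' <= 0, the
   modulation weight on the left can be dropped, and everything reduces to
     || \<xi> <\<xi>>^s (F_1 * ... * F_k) ||_L2 <= C prod_i ||F_i||_(X_s,b),   <x> = 1 + |x|.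
   Distributing <\<xi>>^s over the factors leaves terms \<xi> (Q * <\<xi>>^s F) in which Q is a
   convolution of at least two X_s,b functions. Since s >= 3b > 3/2, such a Q has finite mass and
   first moment, and Cauchy-Schwarz in \<xi> bounds it by an integrable function of \<tau> alone. Where
   the frequency of Q is at least |\<xi>|/2 the derivative falls on Q; elsewhere the modulation
   weight of F pays for it, because
     \<integral>_{|\<eta>| >= |\<xi>|/2} <c - \<eta>^3>^(-2b) d\<eta> <= 8/(3 \<xi>^2) \<integral> <t>^(-2b) dt. *)

section \<open>Convolution of nonnegative functions\<close>

lemma nn_integral_lborel_translate:
  fixes f :: "'a::euclidean_space \<Rightarrow> ennreal"
  assumes [measurable]: "f \<in> borel_measurable borel"
  shows "(\<integral>\<^sup>+w. f (w - c) \<partial>lborel) = (\<integral>\<^sup>+w. f w \<partial>lborel)"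
proof -
  have "(\<integral>\<^sup>+w. f w \<partial>lborel) = (\<integral>\<^sup>+w. f w \<partial>distr lborel borel ((+) (- c)))"
    by (simp add: lborel_distr_plus)
  also have "\<dots> = (\<integral>\<^sup>+w. f (- c + w) \<partial>lborel)"
    by (subst nn_integral_distr) auto
  finally show ?thesis by simp
qed

lemma nn_integral_lborel_reflect:
  fixes f :: "'a::euclidean_space \<Rightarrow> ennreal"
  assumes [measurable]: "f \<in> borel_measurable borel"
  shows "(\<integral>\<^sup>+w. f (c - w) \<partial>lborel) = (\<integral>\<^sup>+w. f w \<partial>lborel)"
proof -
  have "(lborel :: 'a measure) = distr lborel borel (\<lambda>x. c + (-1) *\<^sub>R x)"
    using lborel_affine[of "-1" c] by (simp add: density_1)
  then have "(\<integral>\<^sup>+w. f w \<partial>lborel) = (\<integral>\<^sup>+w. f w \<partial>distr lborel borel (\<lambda>x. c + (-1) *\<^sub>R x))"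
    by simp
  also have "\<dots> = (\<integral>\<^sup>+w. f (c - w) \<partial>lborel)"
    by (subst nn_integral_distr) auto
  finally show ?thesis by simp
qed

lemma nn_integral_lborel_pair:
  fixes f :: "'a::euclidean_space \<times> 'b::euclidean_space \<Rightarrow> ennreal"
  assumes "f \<in> borel_measurable borel"
  shows "(\<integral>\<^sup>+w. f w \<partial>lborel) = (\<integral>\<^sup>+y. \<integral>\<^sup>+x. f (x, y) \<partial>lborel \<partial>lborel)"
    and "(\<integral>\<^sup>+w. f w \<partial>lborel) = (\<integral>\<^sup>+x. \<integral>\<^sup>+y. f (x, y) \<partial>lborel \<partial>lborel)"
proof -
  have m: "f \<in> borel_measurable (lborel \<Otimes>\<^sub>M lborel)"
    using assms by (simp add: lborel_prod)
  show "(\<integral>\<^sup>+w. f w \<partial>lborel) = (\<integral>\<^sup>+y. \<integral>\<^sup>+x. f (x, y) \<partial>lborel \<partial>lborel)"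
    using lborel_pair.nn_integral_snd[OF m] by (simp add: lborel_prod)
  show "(\<integral>\<^sup>+w. f w \<partial>lborel) = (\<integral>\<^sup>+x. \<integral>\<^sup>+y. f (x, y) \<partial>lborel \<partial>lborel)"
    using lborel.nn_integral_fst[OF m] by (simp add: lborel_prod)
qed

definition conv :: "('a::euclidean_space \<Rightarrow> ennreal) \<Rightarrow> ('a \<Rightarrow> ennreal) \<Rightarrow> 'a \<Rightarrow> ennreal" where
  "conv F G z = (\<integral>\<^sup>+w. F w * G (z - w) \<partial>lborel)"

lemma measurable_conv [measurable]:
  assumes [measurable]: "F \<in> borel_measurable borel" "G \<in> borel_measurable borel"
  shows "conv F G \<in> borel_measurable borel"
proof -
  have "(\<lambda>(z, w). F w * G (z - w)) \<in> borel_measurable (lborel \<Otimes>\<^sub>M lborel)"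
    by measurable
  then have "(\<lambda>z. \<integral>\<^sup>+w. F w * G (z - w) \<partial>lborel) \<in> borel_measurable lborel"
    by measurable
  then show ?thesis unfolding conv_def[abs_def] by simp
qed

lemma conv_commute:
  assumes [measurable]: "F \<in> borel_measurable borel" "G \<in> borel_measurable borel"
  shows "conv F G = conv G F"
proof
  fix z
  have "conv G F z = (\<integral>\<^sup>+w. (\<lambda>w. F w * G (z - w)) (z - w) \<partial>lborel)"
    unfolding conv_def by (simp add: mult.commute)
  also have "\<dots> = conv F G z"
    unfolding conv_def by (rule nn_integral_lborel_reflect) measurable
  finally show "conv F G z = conv G F z" by simp
qed

lemma nn_integral_conv:
  assumes [measurable]: "F \<in> borel_measurable borel" "G \<in> borel_measurable borel"
  shows "(\<integral>\<^sup>+z. conv F G z \<partial>lborel) = (\<integral>\<^sup>+w. F w \<partial>lborel) * (\<integral>\<^sup>+w. G w \<partial>lborel)"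
proof -
  have "(\<integral>\<^sup>+z. conv F G z \<partial>lborel) = (\<integral>\<^sup>+w. \<integral>\<^sup>+z. F w * G (z - w) \<partial>lborel \<partial>lborel)"
    unfolding conv_def by (rule lborel_pair.Fubini'[symmetric]) measurable
  also have "\<dots> = (\<integral>\<^sup>+w. F w * (\<integral>\<^sup>+z. G z \<partial>lborel) \<partial>lborel)"
    by (simp add: nn_integral_cmult nn_integral_lborel_translate)
  also have "\<dots> = (\<integral>\<^sup>+w. F w \<partial>lborel) * (\<integral>\<^sup>+w. G w \<partial>lborel)"
    by (simp add: nn_integral_multc)
  finally show ?thesis .
qed

lemma conv_assoc:
  assumes [measurable]: "F \<in> borel_measurable borel" "G \<in> borel_measurable borel"
    "H \<in> borel_measurable borel"
  shows "conv F (conv G H) = conv (conv F G) H"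
proof
  fix z
  have "conv F (conv G H) z = (\<integral>\<^sup>+w. F w * (\<integral>\<^sup>+v. G (v - w) * H (z - v) \<partial>lborel) \<partial>lborel)"
  proof -
    have "(\<integral>\<^sup>+u. G u * H (z - w - u) \<partial>lborel) = (\<integral>\<^sup>+v. G (v - w) * H (z - v) \<partial>lborel)" for w
      using nn_integral_lborel_translate[of "\<lambda>u. G u * H (z - w - u)" w]
      by (simp add: algebra_simps)
    then show ?thesis unfolding conv_def by simp
  qed
  also have "\<dots> = (\<integral>\<^sup>+w. \<integral>\<^sup>+v. F w * G (v - w) * H (z - v) \<partial>lborel \<partial>lborel)"
    by (simp add: nn_integral_cmult[symmetric] mult.assoc)
  also have "\<dots> = (\<integral>\<^sup>+v. \<integral>\<^sup>+w. F w * G (v - w) * H (z - v) \<partial>lborel \<partial>lborel)"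
    by (rule lborel_pair.Fubini') measurable
  also have "\<dots> = conv (conv F G) H z"
    unfolding conv_def by (simp add: nn_integral_multc)
  finally show "conv F (conv G H) z = conv (conv F G) H z" .
qed

lemma conv_mono:
  assumes "\<And>w. F w \<le> F' w" "\<And>w. G w \<le> G' w"
  shows "conv F G z \<le> conv F' G' z"
  unfolding conv_def by (intro nn_integral_mono mult_mono assms) simp_all

lemma conv_add_right:
  assumes [measurable]: "F \<in> borel_measurable borel" "G \<in> borel_measurable borel"
    "H \<in> borel_measurable borel"
  shows "conv F (\<lambda>w. G w + H w) z = conv F G z + conv F H z"
  unfolding conv_def by (simp add: distrib_left nn_integral_add)

lemma conv_cmult_right:
  assumes [measurable]: "F \<in> borel_measurable borel" "G \<in> borel_measurable borel"
  shows "conv F (\<lambda>w. c * G w) z = c * conv F G z"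
  unfolding conv_def by (simp add: nn_integral_cmult[symmetric] mult.left_commute)

fun conv_list :: "('a::euclidean_space \<Rightarrow> ennreal) list \<Rightarrow> 'a \<Rightarrow> ennreal" where
  "conv_list [] = (\<lambda>_. 0)"
| "conv_list [F] = F"
| "conv_list (F # G # L) = conv F (conv_list (G # L))"

lemma measurable_conv_list [measurable]:
  "(\<And>F. F \<in> set L \<Longrightarrow> F \<in> borel_measurable borel) \<Longrightarrow> conv_list L \<in> borel_measurable borel"
  by (induction L rule: conv_list.induct) auto

lemma ennsqrt_power2 [simp]: "(ennsqrt x)\<^sup>2 = x"
  by (cases x) (auto simp: ennsqrt_def ennreal_power)

lemma ennsqrt_mult_self [simp]: "ennsqrt x * ennsqrt x = x"
  using ennsqrt_power2[of x] by (simp add: power2_eq_square)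

lemma ennsqrt_of_power2 [simp]: "ennsqrt (x\<^sup>2) = x"
  by (cases x) (auto simp: ennsqrt_def ennreal_power)

lemma ennsqrt_mono: "x \<le> y \<Longrightarrow> ennsqrt x \<le> ennsqrt y"
  by (cases x; cases y) (auto simp: ennsqrt_def ennreal_le_iff top_unique)

lemma le_ennsqrt: "a\<^sup>2 \<le> x \<Longrightarrow> a \<le> ennsqrt x"
  using ennsqrt_mono[of "a\<^sup>2" x] by simp

lemma ennsqrt_mult: "ennsqrt (x * y) = ennsqrt x * ennsqrt y"
  using ennsqrt_of_power2[of "ennsqrt x * ennsqrt y"] by (simp add: power_mult_distrib)

lemma ennsqrt_prod_list: "ennsqrt (prod_list xs) = prod_list (map ennsqrt xs)"
  using ennsqrt_of_power2[of 1] by (induction xs) (simp_all add: ennsqrt_mult)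

lemma ennsqrt_less_top: "x < \<infinity> \<Longrightarrow> ennsqrt x < \<infinity>"
  by (simp add: ennsqrt_def)

lemma measurable_ennsqrt [measurable]: "ennsqrt \<in> borel_measurable borel"
  unfolding ennsqrt_def[abs_def] by measurable

lemma ennreal_add_power2_le: "((x::ennreal) + y)\<^sup>2 \<le> 2 * x\<^sup>2 + 2 * y\<^sup>2"
proof -
  have "(x + y)\<^sup>2 = x\<^sup>2 + y\<^sup>2 + 2 * x * y"
    unfolding power2_eq_square mult_2 by (simp add: distrib_left distrib_right add_ac mult.commute)
  also have "\<dots> \<le> x\<^sup>2 + y\<^sup>2 + (x\<^sup>2 + y\<^sup>2)"
    by (intro add_left_mono sum_of_squares_ge_ennreal)
  finally show ?thesis by (simp add: mult_2 algebra_simps)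
qed

lemma Cauchy_Schwarz_nn_integral_weighted:
  fixes f g h :: "'a \<Rightarrow> ennreal"
  assumes [measurable]: "f \<in> borel_measurable M" "g \<in> borel_measurable M" "h \<in> borel_measurable M"
  shows "(\<integral>\<^sup>+x. f x * g x * h x \<partial>M)\<^sup>2 \<le> (\<integral>\<^sup>+x. (f x)\<^sup>2 * h x \<partial>M) * (\<integral>\<^sup>+x. (g x)\<^sup>2 * h x \<partial>M)"
proof -
  have "(\<integral>\<^sup>+x. (f x * ennsqrt (h x)) * (g x * ennsqrt (h x)) \<partial>M)\<^sup>2
     \<le> (\<integral>\<^sup>+x. (f x * ennsqrt (h x))\<^sup>2 \<partial>M) * (\<integral>\<^sup>+x. (g x * ennsqrt (h x))\<^sup>2 \<partial>M)"
    by (rule Cauchy_Schwarz_nn_integral) measurable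
  moreover have "(f x * ennsqrt (h x)) * (g x * ennsqrt (h x)) = f x * g x * h x" for x
    by (metis ennsqrt_mult_self mult.assoc mult.left_commute)
  ultimately show ?thesis by (simp add: power_mult_distrib)
qed

lemma Cauchy_Schwarz_nn_integral_ennsqrt:
  fixes f g :: "'a \<Rightarrow> ennreal"
  assumes [measurable]: "f \<in> borel_measurable M" "g \<in> borel_measurable M"
  shows "(\<integral>\<^sup>+x. f x * g x \<partial>M) \<le> ennsqrt (\<integral>\<^sup>+x. (f x)\<^sup>2 \<partial>M) * ennsqrt (\<integral>\<^sup>+x. (g x)\<^sup>2 \<partial>M)"
  using Cauchy_Schwarz_nn_integral[of f M g] by (simp add: le_ennsqrt ennsqrt_mult[symmetric])

lemma nn_integral_conv_power2_le:
  fixes F G :: "'a::euclidean_space \<Rightarrow> ennreal"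
  assumes [measurable]: "F \<in> borel_measurable borel" "G \<in> borel_measurable borel"
  shows "(\<integral>\<^sup>+z. (conv F G z)\<^sup>2 \<partial>lborel) \<le> (\<integral>\<^sup>+z. (F z)\<^sup>2 \<partial>lborel) * (\<integral>\<^sup>+z. G z \<partial>lborel)\<^sup>2"
proof -
  have "(conv F G z)\<^sup>2 \<le> conv (\<lambda>w. (F w)\<^sup>2) G z * (\<integral>\<^sup>+w. G w \<partial>lborel)" for z
  proof -
    have "(conv F G z)\<^sup>2 \<le> (\<integral>\<^sup>+w. (F w)\<^sup>2 * G (z - w) \<partial>lborel) * (\<integral>\<^sup>+w. G (z - w) \<partial>lborel)"
      using Cauchy_Schwarz_nn_integral_weighted[of F lborel "\<lambda>_. 1" "\<lambda>w. G (z - w)"]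
      unfolding conv_def by simp
    then show ?thesis
      unfolding conv_def using nn_integral_lborel_reflect[of G z] by simp
  qed
  then have "(\<integral>\<^sup>+z. (conv F G z)\<^sup>2 \<partial>lborel)
      \<le> (\<integral>\<^sup>+z. conv (\<lambda>w. (F w)\<^sup>2) G z \<partial>lborel) * (\<integral>\<^sup>+w. G w \<partial>lborel)"
    by (subst nn_integral_multc[symmetric]) (auto intro: nn_integral_mono)
  also have "\<dots> = (\<integral>\<^sup>+z. (F z)\<^sup>2 \<partial>lborel) * (\<integral>\<^sup>+z. G z \<partial>lborel)\<^sup>2"
    by (simp add: nn_integral_conv power2_eq_square mult.assoc)
  finally show ?thesis .
qed

section \<open>Integrals of powers of \<open>1 + \<bar>x\<bar>\<close>\<close>

definition bracket :: "real \<Rightarrow> real" where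
  "bracket x = 1 + \<bar>x\<bar>"

lemma bracket_ge_1 [simp]: "bracket x \<ge> 1"
  and bracket_pos [simp]: "bracket x > 0"
  and bracket_nonneg [simp]: "bracket x \<ge> 0"
  and bracket_ne_0 [simp]: "bracket x \<noteq> 0"
  by (auto simp: bracket_def)

lemma bracket_powr_pos [simp]: "bracket x powr a > 0"
  and bracket_powr_nonneg [simp]: "bracket x powr a \<ge> 0"
  by simp_all

lemma bracket_minus [simp]: "bracket (- x) = bracket x"
  by (simp add: bracket_def)

lemma bracket_add_le: "bracket (x + y) \<le> bracket x + bracket y"
  unfolding bracket_def by (simp add: abs_triangle_ineq add_increasing)

lemma bracket_powr_add_le:
  assumes "s \<ge> 0"
  shows "bracket (x + y) powr s \<le> 2 powr s * (bracket x powr s + bracket y powr s)"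
proof -
  have "bracket (x + y) powr s \<le> (2 * max (bracket x) (bracket y)) powr s"
    using bracket_add_le[of x y] assms by (intro powr_mono2) auto
  also have "\<dots> = 2 powr s * max (bracket x) (bracket y) powr s"
    by (simp add: powr_mult)
  also have "\<dots> \<le> 2 powr s * (bracket x powr s + bracket y powr s)"
    by (intro mult_left_mono) (auto simp: max_def)
  finally show ?thesis .
qed

lemma measurable_bracket [measurable]: "bracket \<in> borel_measurable borel"
  unfolding bracket_def[abs_def] by measurable

lemma ennreal_bracket_powr_sq:
  "(ennreal (bracket x powr a))\<^sup>2 = ennreal (bracket x powr (2 * a))"
proof -
  have "(bracket x powr a)\<^sup>2 = bracket x powr (2 * a)"
    by (simp add: power2_eq_square powr_add[symmetric])
  then show ?thesis by (simp add: ennreal_power)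
qed

lemma ennreal_bracket_powr_inverse:
  "ennreal (bracket x powr - a) * ennreal (bracket x powr a) = 1"
  by (simp add: ennreal_mult'[symmetric] powr_minus)

definition bracket_integral :: "real \<Rightarrow> ennreal" where
  "bracket_integral a = (\<integral>\<^sup>+x. ennreal (bracket x powr - a) \<partial>lborel)"

lemma nn_integral_even_le:
  fixes f :: "real \<Rightarrow> ennreal"
  assumes [measurable]: "f \<in> borel_measurable borel" and even: "\<And>x. f (- x) = f x"
  shows "(\<integral>\<^sup>+x. f x \<partial>lborel) \<le> 2 * (\<integral>\<^sup>+x. f x * indicator {0..} x \<partial>lborel)"
proof -
  have "(\<integral>\<^sup>+x. f x \<partial>lborel) \<le> (\<integral>\<^sup>+x. f x * indicator {0..} x + f x * indicator {..0} x \<partial>lborel)"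
    by (intro nn_integral_mono) (auto split: split_indicator)
  also have "\<dots> = (\<integral>\<^sup>+x. f x * indicator {0..} x \<partial>lborel) + (\<integral>\<^sup>+x. f x * indicator {..0} x \<partial>lborel)"
    by (rule nn_integral_add) auto
  also have "(\<integral>\<^sup>+x. f x * indicator {..0} x \<partial>lborel) = (\<integral>\<^sup>+x. f x * indicator {0..} x \<partial>lborel)"
    using nn_integral_lborel_reflect[of "\<lambda>x. f x * indicator {..0} x" 0]
    by (simp add: even indicator_def)
  finally show ?thesis by (simp add: mult_2)
qed

lemma bracket_integral_half_line:
  assumes "a > 1"
  shows "(\<integral>\<^sup>+x. ennreal (bracket x powr - a) * indicator {0..} x \<partial>lborel) = ennreal (1 / (a - 1))"
proof -
  define F where "F x = (1 + x) powr (1 - a) / (1 - a)" for x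
  have "(\<integral>\<^sup>+x. ennreal ((1 + x) powr - a) * indicator {0..} x \<partial>lborel) = 0 - F 0"
  proof (rule nn_integral_FTC_atLeast)
    fix x :: real assume "0 \<le> x"
    then have "DERIV F x :> (1 - a) * (1 + x) powr (1 - a - 1) / (1 - a)"
      unfolding F_def by (auto intro!: derivative_eq_intros)
    then show "DERIV F x :> (1 + x) powr - a"
      using assms by simp
  next
    show "(F \<longlongrightarrow> 0) at_top" unfolding F_def using assms by real_asymp
  qed simp_all
  also have "0 - F 0 = 1 / (a - 1)" by (simp add: F_def divide_simps)
  finally show ?thesis
    by (subst (asm) nn_integral_cong[where v="\<lambda>x. ennreal (bracket x powr - a) * indicator {0..} x"])
       (auto simp: bracket_def split: split_indicator)
qed

lemma bracket_integral_le:
  assumes "a > 1"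
  shows "bracket_integral a \<le> ennreal (2 / (a - 1))"
proof -
  have "bracket_integral a \<le> 2 * (\<integral>\<^sup>+x. ennreal (bracket x powr - a) * indicator {0..} x \<partial>lborel)"
    unfolding bracket_integral_def by (rule nn_integral_even_le) auto
  also have "\<dots> = ennreal (2 / (a - 1))"
    using assms
    by (simp add: bracket_integral_half_line ennreal_mult'[symmetric] ennreal_numeral[symmetric]
        del: ennreal_numeral)
  finally show ?thesis .
qed

lemma bracket_integral_finite: "a > 1 \<Longrightarrow> bracket_integral a < \<infinity>"
  using bracket_integral_le[of a] by (simp add: le_less_trans)

lemma bracket_integral_translate:
  "(\<integral>\<^sup>+x. ennreal (bracket (c - x) powr - a) \<partial>lborel) = bracket_integral a"
  "(\<integral>\<^sup>+x. ennreal (bracket (x - c) powr - a) \<partial>lborel) = bracket_integral a"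
  unfolding bracket_integral_def
  using nn_integral_lborel_reflect[of "\<lambda>x. ennreal (bracket x powr - a)" c]
    nn_integral_lborel_translate[of "\<lambda>x. ennreal (bracket x powr - a)" c]
  by simp_all

lemma nn_integral_atLeast_le:
  fixes f :: "real \<Rightarrow> ennreal"
  assumes [measurable]: "f \<in> borel_measurable borel"
    and bound: "\<And>n::nat. (\<integral>\<^sup>+x. f x * indicator {a..a + real n} x \<partial>lborel) \<le> M"
  shows "(\<integral>\<^sup>+x. f x * indicator {a..} x \<partial>lborel) \<le> M"
proof -
  let ?g = "\<lambda>n x. f x * indicator {a..a + real n} x"
  have "f x * indicator {a..} x = (SUP n. ?g n x)" for x
  proof (cases "a \<le> x")
    case True
    have "?g (nat \<lceil>x - a\<rceil>) x = f x"
      using True by (simp add: indicator_def) linarith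
    moreover have "?g n x \<le> f x" for n
      by (simp add: indicator_def)
    ultimately show ?thesis
      using True by (intro antisym SUP_upper2[where i="nat \<lceil>x - a\<rceil>"] SUP_least) auto
  qed (simp add: indicator_def)
  moreover have "incseq ?g"
    by (auto simp: incseq_def le_fun_def intro!: mult_left_mono split: split_indicator)
  ultimately have "(\<integral>\<^sup>+x. f x * indicator {a..} x \<partial>lborel) = (SUP n. \<integral>\<^sup>+x. ?g n x \<partial>lborel)"
    by (simp add: nn_integral_monotone_convergence_SUP[symmetric])
  also have "\<dots> \<le> M"
    by (rule SUP_least) (rule bound)
  finally show ?thesis .
qed

lemma bracket_cube_tail_Icc_le:
  assumes "a > 0"
  shows "(\<integral>\<^sup>+y. ennreal (bracket (c - y^3) powr - \<beta>) * indicator {a..a + real n} y \<partial>lborel)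
           \<le> ennreal (1 / (3 * a^2)) * bracket_integral \<beta>"
proof -
  define f where "f t = bracket (c - t) powr - \<beta>" for t
  have [measurable]: "f \<in> borel_measurable borel" unfolding f_def[abs_def] by measurable
  have "(\<integral>\<^sup>+y. ennreal (bracket (c - y^3) powr - \<beta>) * indicator {a..a + real n} y \<partial>lborel)
      \<le> (\<integral>\<^sup>+y. ennreal (1 / (3 * a^2)) * ennreal (f (y^3) * (3 * y^2) * indicator {a..a + real n} y) \<partial>lborel)"
  proof (rule nn_integral_mono)
    fix y :: real
    show "ennreal (bracket (c - y^3) powr - \<beta>) * indicator {a..a + real n} y
        \<le> ennreal (1 / (3 * a^2)) * ennreal (f (y^3) * (3 * y^2) * indicator {a..a + real n} y)"
    proof (cases "y \<in> {a..a + real n}")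
      case True
      then have "a^2 \<le> y^2" using assms by (intro power_mono) auto
      then have "1 \<le> 1 / (3 * a^2) * (3 * y^2)" using assms by (simp add: field_simps)
      then have "1 * f (y^3) \<le> 1 / (3 * a^2) * (3 * y^2) * f (y^3)"
        by (rule mult_right_mono) (simp add: f_def)
      then have "ennreal (f (y^3)) \<le> ennreal (1 / (3 * a^2)) * ennreal (f (y^3) * (3 * y^2))"
        using assms by (simp add: ennreal_mult'[symmetric] mult_ac ennreal_leI)
      then show ?thesis using True by (simp add: f_def)
    qed simp
  qed
  also have "\<dots> = ennreal (1 / (3 * a^2)) * (\<integral>\<^sup>+y. f (y^3) * (3 * y^2) * indicator {a..a + real n} y \<partial>lborel)"
    by (rule nn_integral_cmult) measurable
  also have "(\<integral>\<^sup>+y. f (y^3) * (3 * y^2) * indicator {a..a + real n} y \<partial>lborel)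
      = (\<integral>\<^sup>+t. f t * indicator {a^3..(a + real n)^3} t \<partial>lborel)"
    by (rule nn_integral_substitution[symmetric])
       (auto intro!: derivative_eq_intros continuous_intros simp: set_borel_measurable_def)
  also have "(\<integral>\<^sup>+t. f t * indicator {a^3..(a + real n)^3} t \<partial>lborel)
      \<le> (\<integral>\<^sup>+t. ennreal (bracket (c - t) powr - \<beta>) \<partial>lborel)"
    by (intro nn_integral_mono) (auto simp: f_def split: split_indicator)
  finally show ?thesis
    by (simp add: bracket_integral_translate mult_left_mono)
qed

lemma bracket_cube_tail_le:
  assumes "a > 0"
  shows "(\<integral>\<^sup>+y. ennreal (bracket (c - y^3) powr - \<beta>) * indicator {y. a \<le> \<bar>y\<bar>} y \<partial>lborel)
           \<le> ennreal (2 / (3 * a^2)) * bracket_integral \<beta>"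
proof -
  let ?f = "\<lambda>c y. ennreal (bracket (c - y^3) powr - \<beta>)"
  have half: "(\<integral>\<^sup>+y. ?f c y * indicator {a..} y \<partial>lborel) \<le> ennreal (1 / (3 * a^2)) * bracket_integral \<beta>"
    for c
    by (rule nn_integral_atLeast_le) (use bracket_cube_tail_Icc_le assms in auto)
  have "(\<integral>\<^sup>+y. ?f c y * indicator {y. a \<le> \<bar>y\<bar>} y \<partial>lborel)
      \<le> (\<integral>\<^sup>+y. ?f c y * indicator {a..} y + ?f c y * indicator {..-a} y \<partial>lborel)"
    by (intro nn_integral_mono) (auto split: split_indicator)
  also have "\<dots> = (\<integral>\<^sup>+y. ?f c y * indicator {a..} y \<partial>lborel) + (\<integral>\<^sup>+y. ?f c y * indicator {..-a} y \<partial>lborel)"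
    by (rule nn_integral_add) auto
  also have "(\<integral>\<^sup>+y. ?f c y * indicator {..-a} y \<partial>lborel) = (\<integral>\<^sup>+y. ?f (- c) y * indicator {a..} y \<partial>lborel)"
  proof -
    have "bracket (c - (- y)^3) = bracket (- c - y^3)" for y
      by (simp add: bracket_def abs_minus_commute)
    then show ?thesis
      using nn_integral_lborel_reflect[of "\<lambda>y. ?f c y * indicator {..-a} y" 0]
      by (simp add: indicator_def)
  qed
  also have "(\<integral>\<^sup>+y. ?f c y * indicator {a..} y \<partial>lborel) + (\<integral>\<^sup>+y. ?f (- c) y * indicator {a..} y \<partial>lborel)
      \<le> ennreal (1 / (3 * a^2)) * bracket_integral \<beta> + ennreal (1 / (3 * a^2)) * bracket_integral \<beta>"
    by (intro add_mono half)
  also have "\<dots> = ennreal (2 / (3 * a^2)) * bracket_integral \<beta>"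
    using assms by (simp add: distrib_right[symmetric] ennreal_plus[symmetric] del: ennreal_plus)
  finally show ?thesis .
qed

section \<open>The \<open>X\<^sub>s\<^sub>,\<^sub>b\<close> norm of a nonnegative function\<close>

lemma measurable_fst_real_pair [measurable]: "fst \<in> borel_measurable (borel :: (real \<times> real) measure)"
  and measurable_snd_real_pair [measurable]: "snd \<in> borel_measurable (borel :: (real \<times> real) measure)"
  by (intro borel_measurable_continuous_onI continuous_intros)+

definition xweight :: "real \<Rightarrow> real \<Rightarrow> real \<times> real \<Rightarrow> real" where
  "xweight s b z = bracket (fst z) powr s * bracket (snd z - fst z ^ 3) powr b"

definition Xnorm_sq :: "real \<Rightarrow> real \<Rightarrow> (real \<times> real \<Rightarrow> ennreal) \<Rightarrow> ennreal" where
  "Xnorm_sq s b F = (\<integral>\<^sup>+z. (ennreal (xweight s b z) * F z)\<^sup>2 \<partial>lborel)"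

lemma xweight_pos [simp]: "xweight s b z > 0"
  and xweight_nonneg [simp]: "xweight s b z \<ge> 0"
  by (simp_all add: xweight_def)

lemma measurable_xweight [measurable]: "xweight s b \<in> borel_measurable borel"
  unfolding xweight_def[abs_def] by measurable

lemma nn_integral_inverse_xweight:
  "(\<integral>\<^sup>+z. ennreal (bracket (fst z) powr - a * bracket (snd z - fst z ^ 3) powr - c) \<partial>lborel)
     = bracket_integral a * bracket_integral c"
proof -
  have "(\<integral>\<^sup>+z. ennreal (bracket (fst z) powr - a * bracket (snd z - fst z ^ 3) powr - c) \<partial>lborel)
     = (\<integral>\<^sup>+x. \<integral>\<^sup>+y. ennreal (bracket x powr - a) * ennreal (bracket (y - x ^ 3) powr - c) \<partial>lborel \<partial>lborel)"
    by (subst nn_integral_lborel_pair(2)) (auto simp: ennreal_mult)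
  also have "\<dots> = (\<integral>\<^sup>+x. ennreal (bracket x powr - a) * bracket_integral c \<partial>lborel)"
    by (simp add: nn_integral_cmult bracket_integral_translate)
  also have "\<dots> = bracket_integral a * bracket_integral c"
    unfolding bracket_integral_def by (rule nn_integral_multc) measurable
  finally show ?thesis .
qed

definition sobolev_weighted :: "real \<Rightarrow> (real \<times> real \<Rightarrow> ennreal) \<Rightarrow> real \<times> real \<Rightarrow> ennreal" where
  "sobolev_weighted s F z = ennreal (bracket (fst z) powr s) * F z"

lemma measurable_sobolev_weighted [measurable]:
  assumes [measurable]: "F \<in> borel_measurable borel"
  shows "sobolev_weighted s F \<in> borel_measurable borel"
  unfolding sobolev_weighted_def[abs_def] by measurable

lemma moment_le_Xnorm_sq:
  assumes [measurable]: "F \<in> borel_measurable borel"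
  shows "(\<integral>\<^sup>+z. sobolev_weighted t F z \<partial>lborel)\<^sup>2
           \<le> bracket_integral (2 * s - 2 * t) * bracket_integral (2 * b) * Xnorm_sq s b F"
proof -
  define g where "g z = bracket (fst z) powr (t - s) * bracket (snd z - fst z ^ 3) powr - b" for z
  have [measurable]: "g \<in> borel_measurable borel" unfolding g_def[abs_def] by measurable
  have "sobolev_weighted t F z = (ennreal (xweight s b z) * F z) * ennreal (g z)" for z
  proof -
    have "xweight s b z * g z = bracket (fst z) powr t"
      unfolding xweight_def g_def by (simp add: powr_add[symmetric] mult_ac)
    then show ?thesis
      by (simp add: sobolev_weighted_def ennreal_mult'[symmetric] g_def mult_ac)
  qed
  then have "(\<integral>\<^sup>+z. sobolev_weighted t F z \<partial>lborel)\<^sup>2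
      \<le> (\<integral>\<^sup>+z. (ennreal (xweight s b z) * F z)\<^sup>2 \<partial>lborel) * (\<integral>\<^sup>+z. (ennreal (g z))\<^sup>2 \<partial>lborel)"
    using Cauchy_Schwarz_nn_integral[of "\<lambda>z. ennreal (xweight s b z) * F z" lborel "\<lambda>z. ennreal (g z)"]
    by simp
  also have "(\<lambda>z. (ennreal (g z))\<^sup>2)
      = (\<lambda>z. ennreal (bracket (fst z) powr - (2 * s - 2 * t) * bracket (snd z - fst z ^ 3) powr - (2 * b)))"
  proof
    fix z
    have "(g z)\<^sup>2 = bracket (fst z) powr - (2 * s - 2 * t) * bracket (snd z - fst z ^ 3) powr - (2 * b)"
      unfolding g_def power2_eq_square by (simp add: powr_add[symmetric] algebra_simps)
    then show "(ennreal (g z))\<^sup>2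
        = ennreal (bracket (fst z) powr - (2 * s - 2 * t) * bracket (snd z - fst z ^ 3) powr - (2 * b))"
      by (simp add: ennreal_power g_def)
  qed
  finally show ?thesis
    unfolding Xnorm_sq_def nn_integral_inverse_xweight by (simp add: mult_ac)
qed

lemma bracket_tau_le_xweight:
  assumes "b \<ge> 0" "s \<ge> 3 * b"
  shows "bracket y powr b \<le> xweight s b (x, y)"
proof -
  have "bracket y \<le> bracket (y - x^3) * bracket x ^ 3"
  proof -
    have "\<bar>y\<bar> \<le> \<bar>y - x^3\<bar> + \<bar>x\<bar>^3"
      by (simp add: abs_triangle_ineq4 power_abs[symmetric])
    moreover have "1 + \<bar>x\<bar>^3 \<le> (1 + \<bar>x\<bar>)^3"
      by (simp add: power3_eq_cube algebra_simps)
    then have "(1 + \<bar>y - x^3\<bar>) * (1 + \<bar>x\<bar>^3) \<le> (1 + \<bar>y - x^3\<bar>) * (1 + \<bar>x\<bar>)^3"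
      by (intro mult_left_mono) auto
    moreover have "1 + \<bar>y - x^3\<bar> + \<bar>x\<bar>^3 \<le> (1 + \<bar>y - x^3\<bar>) * (1 + \<bar>x\<bar>^3)"
      by (simp add: algebra_simps)
    ultimately show ?thesis
      unfolding bracket_def by linarith
  qed
  then have "bracket y powr b \<le> (bracket (y - x^3) * bracket x ^ 3) powr b"
    using assms by (intro powr_mono2) auto
  also have "\<dots> = bracket (y - x^3) powr b * bracket x powr (3 * b)"
  proof -
    have "bracket x ^ 3 = bracket x powr 3"
      using powr_realpow[of "bracket x" 3] by simp
    then show ?thesis by (simp only: powr_mult powr_powr mult.commute)
  qed
  also have "\<dots> \<le> bracket (y - x^3) powr b * bracket x powr s"
    using assms by (intro mult_left_mono powr_mono) auto
  finally show ?thesis by (simp add: xweight_def mult.commute)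
qed

definition slice_norm :: "(real \<times> real \<Rightarrow> ennreal) \<Rightarrow> real \<Rightarrow> ennreal" where
  "slice_norm F y = ennsqrt (\<integral>\<^sup>+x. (F (x, y))\<^sup>2 \<partial>lborel)"

lemma measurable_slice_norm [measurable]:
  assumes [measurable]: "F \<in> borel_measurable borel"
  shows "slice_norm F \<in> borel_measurable borel"
  unfolding slice_norm_def[abs_def] by measurable

lemma nn_integral_slice_norm_le:
  assumes [measurable]: "F \<in> borel_measurable borel" and "b \<ge> 0" "s \<ge> 3 * b"
  shows "(\<integral>\<^sup>+y. slice_norm F y \<partial>lborel)\<^sup>2 \<le> bracket_integral (2 * b) * Xnorm_sq s b F"
proof -
  have "slice_norm F y = ennreal (bracket y powr - b) * (ennreal (bracket y powr b) * slice_norm F y)" for y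
    by (simp add: mult.assoc[symmetric] ennreal_bracket_powr_inverse)
  then have "(\<integral>\<^sup>+y. slice_norm F y \<partial>lborel)\<^sup>2
      \<le> (\<integral>\<^sup>+y. (ennreal (bracket y powr - b))\<^sup>2 \<partial>lborel)
         * (\<integral>\<^sup>+y. (ennreal (bracket y powr b) * slice_norm F y)\<^sup>2 \<partial>lborel)"
    using Cauchy_Schwarz_nn_integral[of "\<lambda>y. ennreal (bracket y powr - b)" lborel
        "\<lambda>y. ennreal (bracket y powr b) * slice_norm F y"] by simp
  also have "(\<integral>\<^sup>+y. (ennreal (bracket y powr - b))\<^sup>2 \<partial>lborel) = bracket_integral (2 * b)"
    by (simp add: ennreal_bracket_powr_sq bracket_integral_def)
  also have "(\<integral>\<^sup>+y. (ennreal (bracket y powr b) * slice_norm F y)\<^sup>2 \<partial>lborel)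
      = (\<integral>\<^sup>+y. \<integral>\<^sup>+x. (ennreal (bracket y powr b) * F (x, y))\<^sup>2 \<partial>lborel \<partial>lborel)"
    by (simp add: slice_norm_def power_mult_distrib nn_integral_cmult)
  also have "\<dots> \<le> (\<integral>\<^sup>+y. \<integral>\<^sup>+x. (ennreal (xweight s b (x, y)) * F (x, y))\<^sup>2 \<partial>lborel \<partial>lborel)"
    using bracket_tau_le_xweight[OF assms(2,3)]
    by (intro nn_integral_mono power_mono mult_right_mono ennreal_leI) auto
  also have "\<dots> = Xnorm_sq s b F"
    unfolding Xnorm_sq_def
    by (rule nn_integral_lborel_pair(1)[symmetric, of "\<lambda>z. (ennreal (xweight s b z) * F z)\<^sup>2"])
       measurable
  finally show ?thesis by (simp add: mult_left_mono)
qed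

lemma conv_le_slice_conv:
  assumes [measurable]: "F \<in> borel_measurable borel" "G \<in> borel_measurable borel"
  shows "conv F G (x, y) \<le> (\<integral>\<^sup>+y'. slice_norm F y' * slice_norm G (y - y') \<partial>lborel)"
proof -
  have "conv F G (x, y) = (\<integral>\<^sup>+y'. \<integral>\<^sup>+x'. F (x', y') * G (x - x', y - y') \<partial>lborel \<partial>lborel)"
    unfolding conv_def by (subst nn_integral_lborel_pair(1)) auto
  also have "\<dots> \<le> (\<integral>\<^sup>+y'. slice_norm F y' * slice_norm G (y - y') \<partial>lborel)"
  proof (rule nn_integral_mono)
    fix y' :: real
    have "(\<integral>\<^sup>+x'. F (x', y') * G (x - x', y - y') \<partial>lborel)
       \<le> ennsqrt (\<integral>\<^sup>+x'. (F (x', y'))\<^sup>2 \<partial>lborel) * ennsqrt (\<integral>\<^sup>+x'. (G (x - x', y - y'))\<^sup>2 \<partial>lborel)"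
      by (rule Cauchy_Schwarz_nn_integral_ennsqrt) measurable
    also have "(\<integral>\<^sup>+x'. (G (x - x', y - y'))\<^sup>2 \<partial>lborel) = (\<integral>\<^sup>+x'. (G (x', y - y'))\<^sup>2 \<partial>lborel)"
      using nn_integral_lborel_reflect[of "\<lambda>x'. (G (x', y - y'))\<^sup>2" x] by simp
    finally show "(\<integral>\<^sup>+x'. F (x', y') * G (x - x', y - y') \<partial>lborel) \<le> slice_norm F y' * slice_norm G (y - y')"
      unfolding slice_norm_def .
  qed
  finally show ?thesis .
qed

section \<open>Moment and envelope bounds\<close>

lemma sobolev_weighted_conv_le:
  assumes [measurable]: "F \<in> borel_measurable borel" "G \<in> borel_measurable borel" and "s \<ge> 0"
  shows "sobolev_weighted s (conv F G) z
           \<le> ennreal (2 powr s) * (conv (sobolev_weighted s F) G z + conv F (sobolev_weighted s G) z)"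
proof -
  have "sobolev_weighted s (conv F G) z = (\<integral>\<^sup>+w. ennreal (bracket (fst z) powr s) * (F w * G (z - w)) \<partial>lborel)"
    unfolding sobolev_weighted_def conv_def by (rule nn_integral_cmult[symmetric]) measurable
  also have "\<dots> \<le> (\<integral>\<^sup>+w. ennreal (2 powr s)
      * (sobolev_weighted s F w * G (z - w) + F w * sobolev_weighted s G (z - w)) \<partial>lborel)"
  proof (rule nn_integral_mono)
    fix w :: "real \<times> real"
    have "ennreal (bracket (fst z) powr s)
        \<le> ennreal (2 powr s) * (ennreal (bracket (fst w) powr s) + ennreal (bracket (fst (z - w)) powr s))"
      using bracket_powr_add_le[OF assms(3), of "fst w" "fst (z - w)"]
      by (simp add: ennreal_mult'[symmetric] ennreal_plus[symmetric] ennreal_leI del: ennreal_plus)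
    then have "ennreal (bracket (fst z) powr s) * (F w * G (z - w))
        \<le> ennreal (2 powr s) * (ennreal (bracket (fst w) powr s) + ennreal (bracket (fst (z - w)) powr s))
           * (F w * G (z - w))"
      by (rule mult_right_mono) simp
    also have "\<dots> = ennreal (2 powr s) * (sobolev_weighted s F w * G (z - w) + F w * sobolev_weighted s G (z - w))"
      unfolding sobolev_weighted_def by (simp add: algebra_simps)
    finally show "ennreal (bracket (fst z) powr s) * (F w * G (z - w))
        \<le> ennreal (2 powr s) * (sobolev_weighted s F w * G (z - w) + F w * sobolev_weighted s G (z - w))" .
  qed
  also have "\<dots> = ennreal (2 powr s) * (conv (sobolev_weighted s F) G z + conv F (sobolev_weighted s G) z)"
    unfolding conv_def by (subst nn_integral_cmult) (auto simp: nn_integral_add)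
  finally show ?thesis .
qed

definition moment_bound :: "(real \<times> real \<Rightarrow> ennreal) \<Rightarrow> ennreal \<Rightarrow> bool" where
  "moment_bound R B \<longleftrightarrow> R \<in> borel_measurable borel
     \<and> (\<integral>\<^sup>+z. R z \<partial>lborel)\<^sup>2 \<le> B \<and> (\<integral>\<^sup>+z. sobolev_weighted 1 R z \<partial>lborel)\<^sup>2 \<le> B"

definition envelope_bound :: "(real \<times> real \<Rightarrow> ennreal) \<Rightarrow> ennreal \<Rightarrow> bool" where
  "envelope_bound R B \<longleftrightarrow> moment_bound R B
     \<and> (\<exists>q. q \<in> borel_measurable borel \<and> (\<forall>x y. R (x, y) \<le> q y) \<and> (\<integral>\<^sup>+y. q y \<partial>lborel)\<^sup>2 \<le> B)"

lemma moment_bound_mono: "moment_bound R B \<Longrightarrow> B \<le> B' \<Longrightarrow> moment_bound R B'"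
  unfolding moment_bound_def by (auto intro: order_trans)

definition moment_const :: "real \<Rightarrow> real \<Rightarrow> ennreal" where
  "moment_const s b = (bracket_integral (2 * s) + bracket_integral (2 * s - 2)) * bracket_integral (2 * b)"

lemma moment_bound_Xnorm_sq:
  assumes [measurable]: "F \<in> borel_measurable borel"
  shows "moment_bound F (moment_const s b * Xnorm_sq s b F)"
proof -
  have "(\<integral>\<^sup>+z. sobolev_weighted t F z \<partial>lborel)\<^sup>2 \<le> moment_const s b * Xnorm_sq s b F"
    if "t = 0 \<or> t = 1" for t
    using moment_le_Xnorm_sq[of F t s b] that
    by (elim disjE order_trans) (auto simp: moment_const_def distrib_right intro: add_increasing add_increasing2)
  from this[of 0] this[of 1] show ?thesis
    by (simp add: moment_bound_def sobolev_weighted_def)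
qed

lemma moment_bound_conv:
  assumes "moment_bound F B1" "moment_bound G B2"
  shows "moment_bound (conv F G) (16 * B1 * B2)"
proof -
  have [measurable]: "F \<in> borel_measurable borel" "G \<in> borel_measurable borel"
    using assms by (auto simp: moment_bound_def)
  define a0 a1 b0 b1 where "a0 = (\<integral>\<^sup>+z. F z \<partial>lborel)" "a1 = (\<integral>\<^sup>+z. sobolev_weighted 1 F z \<partial>lborel)"
    "b0 = (\<integral>\<^sup>+z. G z \<partial>lborel)" "b1 = (\<integral>\<^sup>+z. sobolev_weighted 1 G z \<partial>lborel)"
  have bounds: "a0\<^sup>2 \<le> B1" "a1\<^sup>2 \<le> B1" "b0\<^sup>2 \<le> B2" "b1\<^sup>2 \<le> B2"
    using assms by (auto simp: moment_bound_def a0_a1_b0_b1_def)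
  have "(\<integral>\<^sup>+z. conv F G z \<partial>lborel)\<^sup>2 = a0\<^sup>2 * b0\<^sup>2"
    by (simp add: nn_integral_conv a0_a1_b0_b1_def power_mult_distrib)
  also have "\<dots> \<le> B1 * B2"
    using bounds by (intro mult_mono) auto
  also have "\<dots> \<le> 16 * B1 * B2"
    using mult_right_mono[of 1 "16::ennreal" "B1 * B2"] by (simp add: mult.assoc)
  finally have zeroth: "(\<integral>\<^sup>+z. conv F G z \<partial>lborel)\<^sup>2 \<le> 16 * B1 * B2" .
  have "(\<integral>\<^sup>+z. sobolev_weighted 1 (conv F G) z \<partial>lborel)
      \<le> (\<integral>\<^sup>+z. 2 * (conv (sobolev_weighted 1 F) G z + conv F (sobolev_weighted 1 G) z) \<partial>lborel)"
    using sobolev_weighted_conv_le[of F G 1] by (intro nn_integral_mono) simp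
  also have "\<dots> = 2 * (a1 * b0 + a0 * b1)"
    by (simp add: nn_integral_cmult nn_integral_add nn_integral_conv a0_a1_b0_b1_def)
  finally have "(\<integral>\<^sup>+z. sobolev_weighted 1 (conv F G) z \<partial>lborel)\<^sup>2 \<le> (2 * (a1 * b0 + a0 * b1))\<^sup>2"
    by (rule power_mono) simp
  also have "\<dots> = 4 * (a1 * b0 + a0 * b1)\<^sup>2"
    by (simp only: power_mult_distrib) simp
  also have "\<dots> \<le> 4 * (2 * (a1 * b0)\<^sup>2 + 2 * (a0 * b1)\<^sup>2)"
    by (intro mult_left_mono ennreal_add_power2_le) simp
  also have "\<dots> \<le> 4 * (2 * (B1 * B2) + 2 * (B1 * B2))"
    unfolding power_mult_distrib using bounds by (intro mult_left_mono add_mono mult_mono) auto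
  also have "\<dots> = 16 * B1 * B2"
    by (simp add: mult.assoc[symmetric] flip: distrib_left) (simp add: mult_2[symmetric] mult_ac)
  finally show ?thesis
    using zeroth by (simp add: moment_bound_def)
qed

lemma envelope_bound_conv:
  assumes "envelope_bound R B1" "moment_bound F B2"
  shows "envelope_bound (conv F R) (16 * B1 * B2)"
proof -
  have [measurable]: "F \<in> borel_measurable borel" "R \<in> borel_measurable borel"
    using assms by (auto simp: envelope_bound_def moment_bound_def)
  obtain q where [measurable]: "q \<in> borel_measurable borel" and R_le: "\<And>x y. R (x, y) \<le> q y"
    and q_int: "(\<integral>\<^sup>+y. q y \<partial>lborel)\<^sup>2 \<le> B1"
    using assms(1) unfolding envelope_bound_def by blast
  define q' where "q' y = (\<integral>\<^sup>+w. F w * q (y - snd w) \<partial>lborel)" for y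
  have [measurable]: "q' \<in> borel_measurable borel" unfolding q'_def[abs_def] by measurable
  have "conv F R (x, y) \<le> q' y" for x y
    unfolding conv_def q'_def
    using R_le by (intro nn_integral_mono mult_left_mono) (auto simp: case_prod_unfold)
  moreover have "(\<integral>\<^sup>+y. q' y \<partial>lborel)\<^sup>2 \<le> 16 * B1 * B2"
  proof -
    have "(\<integral>\<^sup>+y. q' y \<partial>lborel) = (\<integral>\<^sup>+w. \<integral>\<^sup>+y. F w * q (y - snd w) \<partial>lborel \<partial>lborel)"
      unfolding q'_def by (rule lborel_pair.Fubini') measurable
    also have "\<dots> = (\<integral>\<^sup>+w. F w \<partial>lborel) * (\<integral>\<^sup>+y. q y \<partial>lborel)"
      by (simp add: nn_integral_cmult nn_integral_lborel_translate nn_integral_multc)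
    finally have "(\<integral>\<^sup>+y. q' y \<partial>lborel)\<^sup>2 = (\<integral>\<^sup>+w. F w \<partial>lborel)\<^sup>2 * (\<integral>\<^sup>+y. q y \<partial>lborel)\<^sup>2"
      by (simp add: power_mult_distrib)
    also have "\<dots> \<le> B2 * B1"
      using assms(2) q_int unfolding moment_bound_def by (intro mult_mono) auto
    also have "\<dots> \<le> 16 * B1 * B2"
      using mult_right_mono[of 1 "16::ennreal" "B1 * B2"] by (simp add: mult_ac)
    finally show ?thesis .
  qed
  moreover have "moment_bound (conv F R) (16 * B1 * B2)"
    using moment_bound_conv[OF assms(2) conjunct1[OF assms(1)[unfolded envelope_bound_def]]]
    by (simp add: mult_ac)
  ultimately show ?thesis
    unfolding envelope_bound_def by (blast intro: \<open>q' \<in> borel_measurable borel\<close>)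
qed

definition envelope_const :: "real \<Rightarrow> real \<Rightarrow> ennreal" where
  "envelope_const s b = 16 * (moment_const s b)\<^sup>2 + (bracket_integral (2 * b))\<^sup>2"

lemma envelope_bound_conv_Xnorm_sq:
  assumes [measurable]: "F \<in> borel_measurable borel" "G \<in> borel_measurable borel"
    and "b \<ge> 0" "s \<ge> 3 * b"
  shows "envelope_bound (conv F G) (envelope_const s b * Xnorm_sq s b F * Xnorm_sq s b G)"
proof -
  let ?N = "Xnorm_sq s b F * Xnorm_sq s b G"
  have "moment_bound (conv F G) (16 * (moment_const s b * Xnorm_sq s b F) * (moment_const s b * Xnorm_sq s b G))"
    by (intro moment_bound_conv moment_bound_Xnorm_sq) measurable
  moreover have "16 * (moment_const s b * Xnorm_sq s b F) * (moment_const s b * Xnorm_sq s b G)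
      = 16 * (moment_const s b)\<^sup>2 * ?N"
    by (simp add: power2_eq_square mult_ac)
  moreover have "\<dots> \<le> envelope_const s b * ?N"
    unfolding envelope_const_def by (intro mult_right_mono add_increasing2) auto
  ultimately have moment: "moment_bound (conv F G) (envelope_const s b * ?N)"
    by (metis moment_bound_mono)
  define q where "q y = (\<integral>\<^sup>+y'. slice_norm F y' * slice_norm G (y - y') \<partial>lborel)" for y
  have [measurable]: "q \<in> borel_measurable borel"
    unfolding q_def[abs_def] by measurable
  have "(\<integral>\<^sup>+y. q y \<partial>lborel)\<^sup>2 = (\<integral>\<^sup>+y. slice_norm F y \<partial>lborel)\<^sup>2 * (\<integral>\<^sup>+y. slice_norm G y \<partial>lborel)\<^sup>2"
    using nn_integral_conv[of "slice_norm F" "slice_norm G"]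
    by (simp add: q_def conv_def power_mult_distrib)
  also have "\<dots> \<le> (bracket_integral (2 * b) * Xnorm_sq s b F) * (bracket_integral (2 * b) * Xnorm_sq s b G)"
    using assms by (intro mult_mono nn_integral_slice_norm_le) auto
  also have "\<dots> = (bracket_integral (2 * b))\<^sup>2 * ?N"
    by (simp add: power2_eq_square mult_ac)
  also have "\<dots> \<le> envelope_const s b * ?N"
    unfolding envelope_const_def by (intro mult_right_mono add_increasing) auto
  finally have "(\<integral>\<^sup>+y. q y \<partial>lborel)\<^sup>2 \<le> envelope_const s b * ?N" .
  moreover have "conv F G (x, y) \<le> q y" for x y
    unfolding q_def by (rule conv_le_slice_conv) measurable
  ultimately show ?thesis
    using moment \<open>q \<in> borel_measurable borel\<close> unfolding envelope_bound_def mult.assoc by blast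
qed

lemma moment_bound_conv_list:
  assumes "\<forall>F\<in>set (F0 # L). F \<in> borel_measurable borel"
  shows "moment_bound (conv_list (F0 # L))
           ((16 * moment_const s b) ^ length L * moment_const s b * prod_list (map (Xnorm_sq s b) (F0 # L)))"
  using assms
proof (induction L arbitrary: F0)
  case Nil
  then show ?case using moment_bound_Xnorm_sq[of F0 s b] by simp
next
  case (Cons G L)
  have "moment_bound (conv F0 (conv_list (G # L)))
      (16 * (moment_const s b * Xnorm_sq s b F0)
        * ((16 * moment_const s b) ^ length L * moment_const s b * prod_list (map (Xnorm_sq s b) (G # L))))"
    using Cons by (intro moment_bound_conv moment_bound_Xnorm_sq) auto
  then show ?case by (simp add: mult_ac)
qed

lemma envelope_bound_conv_list:
  assumes "\<forall>F\<in>set (F0 # F1 # L). F \<in> borel_measurable borel" and "b \<ge> 0" "s \<ge> 3 * b"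
  shows "envelope_bound (conv_list (F0 # F1 # L))
           ((16 * moment_const s b) ^ length L * envelope_const s b * prod_list (map (Xnorm_sq s b) (F0 # F1 # L)))"
  using assms(1)
proof (induction L arbitrary: F0 F1)
  case Nil
  then show ?case
    using envelope_bound_conv_Xnorm_sq[of F0 F1 b s] assms(2,3) by (simp add: mult_ac)
next
  case (Cons G L)
  have "envelope_bound (conv F0 (conv_list (F1 # G # L)))
      (16 * ((16 * moment_const s b) ^ length L * envelope_const s b * prod_list (map (Xnorm_sq s b) (F1 # G # L)))
        * (moment_const s b * Xnorm_sq s b F0))"
    using Cons by (intro envelope_bound_conv moment_bound_Xnorm_sq) auto
  then show ?case by (simp add: mult_ac)
qed

section \<open>Gain of one derivative\<close>

lemma resonance_integral_le:
  fixes q :: "real \<Rightarrow> ennreal"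
  assumes [measurable]: "q \<in> borel_measurable borel" and "x \<noteq> 0"
  shows "(\<integral>\<^sup>+w. indicator {w. 2 * \<bar>fst w\<bar> < \<bar>x\<bar>} w
              * ennreal (bracket (y - snd w - (x - fst w)^3) powr - \<beta>) * q (snd w) \<partial>lborel)
           \<le> ennreal (8 / (3 * x^2)) * bracket_integral \<beta> * (\<integral>\<^sup>+\<eta>. q \<eta> \<partial>lborel)"
proof -
  have inner: "(\<integral>\<^sup>+\<xi>. indicator {w. 2 * \<bar>fst w\<bar> < \<bar>x\<bar>} (\<xi>, \<eta>)
        * ennreal (bracket (c - (x - \<xi>)^3) powr - \<beta>) \<partial>lborel)
      \<le> ennreal (8 / (3 * x^2)) * bracket_integral \<beta>" for c \<eta>
  proof -
    have "(\<integral>\<^sup>+\<xi>. indicator {w. 2 * \<bar>fst w\<bar> < \<bar>x\<bar>} (\<xi>, \<eta>)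
          * ennreal (bracket (c - (x - \<xi>)^3) powr - \<beta>) \<partial>lborel)
        \<le> (\<integral>\<^sup>+\<xi>. (\<lambda>u. ennreal (bracket (c - u^3) powr - \<beta>) * indicator {u. \<bar>x\<bar> / 2 \<le> \<bar>u\<bar>} u) (x - \<xi>) \<partial>lborel)"
    proof (intro nn_integral_mono)
      fix \<xi> :: real
      have "\<bar>x\<bar> / 2 \<le> \<bar>x - \<xi>\<bar>" if "2 * \<bar>\<xi>\<bar> < \<bar>x\<bar>"
        using that by linarith
      then show "indicator {w. 2 * \<bar>fst w\<bar> < \<bar>x\<bar>} (\<xi>, \<eta>) * ennreal (bracket (c - (x - \<xi>)^3) powr - \<beta>)
          \<le> ennreal (bracket (c - (x - \<xi>)^3) powr - \<beta>) * indicator {u. \<bar>x\<bar> / 2 \<le> \<bar>u\<bar>} (x - \<xi>)"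
        by (simp add: indicator_def)
    qed
    also have "\<dots> = (\<integral>\<^sup>+u. ennreal (bracket (c - u^3) powr - \<beta>) * indicator {u. \<bar>x\<bar> / 2 \<le> \<bar>u\<bar>} u \<partial>lborel)"
      by (rule nn_integral_lborel_reflect) measurable
    also have "\<dots> \<le> ennreal (2 / (3 * (\<bar>x\<bar> / 2)^2)) * bracket_integral \<beta>"
      by (rule bracket_cube_tail_le) (use assms in auto)
    also have "2 / (3 * (\<bar>x\<bar> / 2)^2) = 8 / (3 * x^2)"
      by (simp add: power_divide)
    finally show ?thesis .
  qed
  have "(\<integral>\<^sup>+w. indicator {w. 2 * \<bar>fst w\<bar> < \<bar>x\<bar>} w
            * ennreal (bracket (y - snd w - (x - fst w)^3) powr - \<beta>) * q (snd w) \<partial>lborel)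
      = (\<integral>\<^sup>+\<eta>. q \<eta> * (\<integral>\<^sup>+\<xi>. indicator {w. 2 * \<bar>fst w\<bar> < \<bar>x\<bar>} (\<xi>, \<eta>)
            * ennreal (bracket ((y - \<eta>) - (x - \<xi>)^3) powr - \<beta>) \<partial>lborel) \<partial>lborel)"
    by (subst nn_integral_lborel_pair(1)) (auto simp: nn_integral_cmult[symmetric] mult_ac)
  also have "\<dots> \<le> (\<integral>\<^sup>+\<eta>. q \<eta> * (ennreal (8 / (3 * x^2)) * bracket_integral \<beta>) \<partial>lborel)"
    by (intro nn_integral_mono mult_left_mono inner) simp
  also have "\<dots> = ennreal (8 / (3 * x^2)) * bracket_integral \<beta> * (\<integral>\<^sup>+\<eta>. q \<eta> \<partial>lborel)"
    by (simp add: nn_integral_multc mult.commute)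
  finally show ?thesis .
qed

definition modulation_weighted :: "real \<Rightarrow> (real \<times> real \<Rightarrow> ennreal) \<Rightarrow> real \<times> real \<Rightarrow> ennreal" where
  "modulation_weighted b G u = ennreal (bracket (snd u - fst u ^ 3) powr b) * G u"

lemma measurable_modulation_weighted [measurable]:
  assumes [measurable]: "G \<in> borel_measurable borel"
  shows "modulation_weighted b G \<in> borel_measurable borel"
  unfolding modulation_weighted_def[abs_def] by measurable

definition conv_low :: "(real \<times> real \<Rightarrow> ennreal) \<Rightarrow> (real \<times> real \<Rightarrow> ennreal) \<Rightarrow> real \<times> real \<Rightarrow> ennreal" where
  "conv_low Q G z = (\<integral>\<^sup>+w. indicator {w. 2 * \<bar>fst w\<bar> < \<bar>fst z\<bar>} w * Q w * G (z - w) \<partial>lborel)"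

lemma measurable_conv_low [measurable]:
  assumes [measurable]: "Q \<in> borel_measurable borel" "G \<in> borel_measurable borel"
  shows "conv_low Q G \<in> borel_measurable borel"
  unfolding conv_low_def[abs_def] by measurable

lemma abs_fst_mult_conv_le:
  assumes [measurable]: "Q \<in> borel_measurable borel" "G \<in> borel_measurable borel"
  shows "ennreal \<bar>fst z\<bar> * conv Q G z
           \<le> 2 * conv (sobolev_weighted 1 Q) G z + ennreal \<bar>fst z\<bar> * conv_low Q G z"
proof -
  have "ennreal \<bar>fst z\<bar> * (Q w * G (z - w))
      \<le> 2 * (sobolev_weighted 1 Q w * G (z - w))
        + ennreal \<bar>fst z\<bar> * (indicator {w. 2 * \<bar>fst w\<bar> < \<bar>fst z\<bar>} w * Q w * G (z - w))" for w
  proof (cases "2 * \<bar>fst w\<bar> < \<bar>fst z\<bar>")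
    case False
    then have "\<bar>fst z\<bar> \<le> 2 * bracket (fst w)"
      by (simp add: bracket_def)
    then have "ennreal \<bar>fst z\<bar> \<le> ennreal (2 * bracket (fst w))"
      by (rule ennreal_leI)
    then have "ennreal \<bar>fst z\<bar> \<le> 2 * ennreal (bracket (fst w))"
      by (simp add: ennreal_mult)
    then have "ennreal \<bar>fst z\<bar> * (Q w * G (z - w)) \<le> 2 * ennreal (bracket (fst w)) * (Q w * G (z - w))"
      by (rule mult_right_mono) simp
    then show ?thesis
      by (simp add: sobolev_weighted_def mult.assoc add_increasing2)
  qed (simp add: add_increasing)
  then have "ennreal \<bar>fst z\<bar> * conv Q G z
      \<le> (\<integral>\<^sup>+w. 2 * (sobolev_weighted 1 Q w * G (z - w))
          + ennreal \<bar>fst z\<bar> * (indicator {w. 2 * \<bar>fst w\<bar> < \<bar>fst z\<bar>} w * Q w * G (z - w)) \<partial>lborel)"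
    unfolding conv_def by (subst nn_integral_cmult[symmetric]) (auto intro: nn_integral_mono)
  also have "\<dots> = 2 * conv (sobolev_weighted 1 Q) G z + ennreal \<bar>fst z\<bar> * conv_low Q G z"
    unfolding conv_def conv_low_def by (simp add: nn_integral_add nn_integral_cmult)
  finally show ?thesis .
qed

lemma conv_low_power2_le:
  assumes [measurable]: "Q \<in> borel_measurable borel" "G \<in> borel_measurable borel"
    "q \<in> borel_measurable borel" and Q_le: "\<And>x y. Q (x, y) \<le> q y"
  shows "(ennreal \<bar>fst z\<bar> * conv_low Q G z)\<^sup>2
           \<le> ennreal (8/3) * bracket_integral (2 * b) * (\<integral>\<^sup>+y. q y \<partial>lborel)
             * conv Q (\<lambda>u. (modulation_weighted b G u)\<^sup>2) z"
proof (cases "fst z = 0")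
  case False
  obtain x y where z: "z = (x, y)" by (cases z)
  define K where "K u = ennreal (bracket (snd u - fst u^3) powr - b)" for u
  have [measurable]: "K \<in> borel_measurable borel" unfolding K_def[abs_def] by measurable
  let ?A = "{w. 2 * \<bar>fst w\<bar> < \<bar>x\<bar>}"
  have MK: "modulation_weighted b G u * K u = G u" for u
    using ennreal_bracket_powr_inverse[of "snd u - fst u^3" b]
    unfolding modulation_weighted_def K_def by (metis mult.commute mult.left_commute mult_1)
  have "conv_low Q G z = (\<integral>\<^sup>+w. modulation_weighted b G (z - w) * (K (z - w) * indicator ?A w) * Q w \<partial>lborel)"
    unfolding conv_low_def z
    by (intro nn_integral_cong) (simp only: mult.assoc[symmetric] MK fst_conv, simp add: mult_ac)
  then have "(conv_low Q G z)\<^sup>2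
      \<le> (\<integral>\<^sup>+w. (modulation_weighted b G (z - w))\<^sup>2 * Q w \<partial>lborel)
         * (\<integral>\<^sup>+w. (K (z - w) * indicator ?A w)\<^sup>2 * Q w \<partial>lborel)"
    by (simp add: Cauchy_Schwarz_nn_integral_weighted)
  also have "(\<integral>\<^sup>+w. (modulation_weighted b G (z - w))\<^sup>2 * Q w \<partial>lborel)
      = conv Q (\<lambda>u. (modulation_weighted b G u)\<^sup>2) z"
    unfolding conv_def by (simp add: mult.commute)
  also have "(\<integral>\<^sup>+w. (K (z - w) * indicator ?A w)\<^sup>2 * Q w \<partial>lborel)
      \<le> (\<integral>\<^sup>+w. indicator ?A w * ennreal (bracket (y - snd w - (x - fst w)^3) powr - (2 * b)) * q (snd w) \<partial>lborel)"
    using Q_le[of "fst w" "snd w" for w]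
    by (intro nn_integral_mono)
       (auto simp: K_def z power_mult_distrib ennreal_bracket_powr_sq indicator_def intro: mult_left_mono)
  also have "\<dots> \<le> ennreal (8 / (3 * x^2)) * bracket_integral (2 * b) * (\<integral>\<^sup>+y. q y \<partial>lborel)"
    using False z by (intro resonance_integral_le) auto
  finally have "(ennreal \<bar>fst z\<bar> * conv_low Q G z)\<^sup>2
      \<le> ennreal (x^2) * (conv Q (\<lambda>u. (modulation_weighted b G u)\<^sup>2) z
          * (ennreal (8 / (3 * x^2)) * bracket_integral (2 * b) * (\<integral>\<^sup>+y. q y \<partial>lborel)))"
    unfolding z by (simp add: power_mult_distrib ennreal_power mult_left_mono)
  also have "\<dots> = ennreal (x^2) * ennreal (8 / (3 * x^2)) * bracket_integral (2 * b)
      * (\<integral>\<^sup>+y. q y \<partial>lborel) * conv Q (\<lambda>u. (modulation_weighted b G u)\<^sup>2) z"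
    by (simp add: mult_ac)
  also have "ennreal (x^2) * ennreal (8 / (3 * x^2)) = ennreal (8/3)"
    using False z by (simp add: ennreal_mult'[symmetric])
  finally show ?thesis .
qed (simp add: conv_low_def)

lemma nn_integral_abs_fst_conv_power2_le:
  assumes [measurable]: "Q \<in> borel_measurable borel" "G \<in> borel_measurable borel"
    "q \<in> borel_measurable borel" and Q_le: "\<And>x y. Q (x, y) \<le> q y"
  shows "(\<integral>\<^sup>+z. (ennreal \<bar>fst z\<bar> * conv Q G z)\<^sup>2 \<partial>lborel)
     \<le> 8 * (\<integral>\<^sup>+z. (G z)\<^sup>2 \<partial>lborel) * (\<integral>\<^sup>+z. sobolev_weighted 1 Q z \<partial>lborel)\<^sup>2
       + ennreal (16/3) * bracket_integral (2 * b) * (\<integral>\<^sup>+y. q y \<partial>lborel) * (\<integral>\<^sup>+z. Q z \<partial>lborel)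
         * (\<integral>\<^sup>+z. (modulation_weighted b G z)\<^sup>2 \<partial>lborel)"
proof -
  let ?A = "conv (sobolev_weighted 1 Q) G" and ?H2 = "\<lambda>u. (modulation_weighted b G u)\<^sup>2"
  let ?c = "ennreal (8/3) * bracket_integral (2 * b) * (\<integral>\<^sup>+y. q y \<partial>lborel)"
  have "(ennreal \<bar>fst z\<bar> * conv Q G z)\<^sup>2 \<le> 8 * (?A z)\<^sup>2 + 2 * ?c * conv Q ?H2 z" for z
  proof -
    have "(ennreal \<bar>fst z\<bar> * conv Q G z)\<^sup>2 \<le> (2 * ?A z + ennreal \<bar>fst z\<bar> * conv_low Q G z)\<^sup>2"
      by (intro power_mono abs_fst_mult_conv_le) measurable
    also have "\<dots> \<le> 2 * (2 * ?A z)\<^sup>2 + 2 * (ennreal \<bar>fst z\<bar> * conv_low Q G z)\<^sup>2"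
      by (rule ennreal_add_power2_le)
    also have "\<dots> \<le> 2 * (2 * ?A z)\<^sup>2 + 2 * (?c * conv Q ?H2 z)"
      using conv_low_power2_le[OF assms] by (intro add_left_mono mult_left_mono) auto
    finally show ?thesis
      by (simp add: power_mult_distrib mult.assoc)
  qed
  then have "(\<integral>\<^sup>+z. (ennreal \<bar>fst z\<bar> * conv Q G z)\<^sup>2 \<partial>lborel)
      \<le> (\<integral>\<^sup>+z. 8 * (?A z)\<^sup>2 + 2 * ?c * conv Q ?H2 z \<partial>lborel)"
    by (rule nn_integral_mono)
  also have "\<dots> = 8 * (\<integral>\<^sup>+z. (?A z)\<^sup>2 \<partial>lborel) + 2 * ?c * (\<integral>\<^sup>+z. conv Q ?H2 z \<partial>lborel)"
    by (subst nn_integral_add) (auto simp: nn_integral_cmult)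
  also have "(\<integral>\<^sup>+z. conv Q ?H2 z \<partial>lborel) = (\<integral>\<^sup>+z. Q z \<partial>lborel) * (\<integral>\<^sup>+z. ?H2 z \<partial>lborel)"
    by (rule nn_integral_conv) measurable
  also have "8 * (\<integral>\<^sup>+z. (?A z)\<^sup>2 \<partial>lborel) + 2 * ?c * ((\<integral>\<^sup>+z. Q z \<partial>lborel) * (\<integral>\<^sup>+z. ?H2 z \<partial>lborel))
      \<le> 8 * ((\<integral>\<^sup>+z. (G z)\<^sup>2 \<partial>lborel) * (\<integral>\<^sup>+z. sobolev_weighted 1 Q z \<partial>lborel)\<^sup>2)
        + 2 * ?c * ((\<integral>\<^sup>+z. Q z \<partial>lborel) * (\<integral>\<^sup>+z. ?H2 z \<partial>lborel))"
    using nn_integral_conv_power2_le[of G "sobolev_weighted 1 Q"]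
    by (intro add_right_mono mult_left_mono) (simp_all add: conv_commute)
  also have "2 * ?c = ennreal (16/3) * bracket_integral (2 * b) * (\<integral>\<^sup>+y. q y \<partial>lborel)"
    by (simp add: ennreal_mult'[symmetric] ennreal_numeral[symmetric] mult.assoc[symmetric] del: ennreal_numeral)
  finally show ?thesis
    by (simp add: mult.assoc)
qed

definition gain_const :: "real \<Rightarrow> ennreal" where
  "gain_const b = 8 + ennreal (32/3) * bracket_integral (2 * b)"

lemma abs_fst_conv_sobolev_weighted_le:
  assumes "envelope_bound Q B" and [measurable]: "F \<in> borel_measurable borel" and "b \<ge> 0"
  shows "(\<integral>\<^sup>+z. (ennreal \<bar>fst z\<bar> * conv Q (sobolev_weighted s F) z)\<^sup>2 \<partial>lborel)
           \<le> gain_const b * Xnorm_sq s b F * B"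
proof -
  have [measurable]: "Q \<in> borel_measurable borel"
    using assms by (simp add: envelope_bound_def moment_bound_def)
  obtain q where [measurable]: "q \<in> borel_measurable borel" and Q_le: "\<And>x y. Q (x, y) \<le> q y"
    and q_int: "(\<integral>\<^sup>+y. q y \<partial>lborel)\<^sup>2 \<le> B"
    using assms unfolding envelope_bound_def by blast
  have Q_int: "(\<integral>\<^sup>+z. Q z \<partial>lborel)\<^sup>2 \<le> B" and Q_moment: "(\<integral>\<^sup>+z. sobolev_weighted 1 Q z \<partial>lborel)\<^sup>2 \<le> B"
    using assms by (auto simp: envelope_bound_def moment_bound_def)
  let ?WF = "sobolev_weighted s F"
  have weighted: "modulation_weighted b ?WF z = ennreal (xweight s b z) * F z" for z
    unfolding modulation_weighted_def sobolev_weighted_def xweight_def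
    by (simp add: ennreal_mult'[symmetric] mult_ac)
  have "?WF z \<le> modulation_weighted b ?WF z" for z
    using assms(3) mult_right_mono[of 1 "ennreal (bracket (snd z - fst z ^ 3) powr b)" "?WF z"]
    by (simp add: modulation_weighted_def ge_one_powr_ge_zero)
  then have WF_le: "(\<integral>\<^sup>+z. (?WF z)\<^sup>2 \<partial>lborel) \<le> Xnorm_sq s b F"
    unfolding Xnorm_sq_def weighted[symmetric] by (intro nn_integral_mono power_mono) auto
  have qQ: "(\<integral>\<^sup>+y. q y \<partial>lborel) * (\<integral>\<^sup>+z. Q z \<partial>lborel) \<le> 2 * B"
  proof -
    have "(\<integral>\<^sup>+y. q y \<partial>lborel) * (\<integral>\<^sup>+z. Q z \<partial>lborel)
        \<le> 2 * (\<integral>\<^sup>+y. q y \<partial>lborel) * (\<integral>\<^sup>+z. Q z \<partial>lborel)"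
      using mult_right_mono[of 1 "2::ennreal"] by (simp add: mult.assoc)
    also have "\<dots> \<le> (\<integral>\<^sup>+y. q y \<partial>lborel)\<^sup>2 + (\<integral>\<^sup>+z. Q z \<partial>lborel)\<^sup>2"
      by (rule sum_of_squares_ge_ennreal)
    also have "\<dots> \<le> B + B"
      using q_int Q_int by (rule add_mono)
    finally show ?thesis by (simp add: mult_2)
  qed
  have "(\<integral>\<^sup>+z. (ennreal \<bar>fst z\<bar> * conv Q ?WF z)\<^sup>2 \<partial>lborel)
     \<le> 8 * (\<integral>\<^sup>+z. (?WF z)\<^sup>2 \<partial>lborel) * (\<integral>\<^sup>+z. sobolev_weighted 1 Q z \<partial>lborel)\<^sup>2
       + ennreal (16/3) * bracket_integral (2 * b) * (\<integral>\<^sup>+y. q y \<partial>lborel) * (\<integral>\<^sup>+z. Q z \<partial>lborel)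
         * (\<integral>\<^sup>+z. (modulation_weighted b ?WF z)\<^sup>2 \<partial>lborel)"
    by (rule nn_integral_abs_fst_conv_power2_le) (use Q_le in auto)
  also have "\<dots> = 8 * (\<integral>\<^sup>+z. (?WF z)\<^sup>2 \<partial>lborel) * (\<integral>\<^sup>+z. sobolev_weighted 1 Q z \<partial>lborel)\<^sup>2
       + ennreal (16/3) * bracket_integral (2 * b)
         * ((\<integral>\<^sup>+y. q y \<partial>lborel) * (\<integral>\<^sup>+z. Q z \<partial>lborel)) * Xnorm_sq s b F"
    by (simp add: weighted Xnorm_sq_def mult.assoc)
  also have "\<dots> \<le> 8 * Xnorm_sq s b F * B + ennreal (16/3) * bracket_integral (2 * b) * (2 * B) * Xnorm_sq s b F"
  proof (rule add_mono)
    show "8 * (\<integral>\<^sup>+z. (?WF z)\<^sup>2 \<partial>lborel) * (\<integral>\<^sup>+z. sobolev_weighted 1 Q z \<partial>lborel)\<^sup>2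
        \<le> 8 * Xnorm_sq s b F * B"
      using WF_le Q_moment by (intro mult_mono) auto
    show "ennreal (16/3) * bracket_integral (2 * b) * ((\<integral>\<^sup>+y. q y \<partial>lborel) * (\<integral>\<^sup>+z. Q z \<partial>lborel))
        * Xnorm_sq s b F \<le> ennreal (16/3) * bracket_integral (2 * b) * (2 * B) * Xnorm_sq s b F"
      using qQ by (intro mult_right_mono mult_left_mono) auto
  qed
  also have "\<dots> = (8 + 2 * ennreal (16/3) * bracket_integral (2 * b)) * Xnorm_sq s b F * B"
    by (simp add: algebra_simps)
  also have "2 * ennreal (16/3) = ennreal (32/3)"
    by (simp add: ennreal_mult'[symmetric] ennreal_numeral[symmetric] del: ennreal_numeral)
  finally show ?thesis
    unfolding gain_const_def .
qed

section \<open>The multilinear estimate\<close>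

lemma bound_consts_finite:
  assumes "b > 1/2" "s \<ge> 3 * b"
  shows "moment_const s b < \<infinity>" "envelope_const s b < \<infinity>" "gain_const b < \<infinity>"
proof -
  have "bracket_integral (2 * s) < \<infinity>" "bracket_integral (2 * s - 2) < \<infinity>" "bracket_integral (2 * b) < \<infinity>"
    by (rule bracket_integral_finite, use assms in linarith)+
  then show "moment_const s b < \<infinity>" "envelope_const s b < \<infinity>" "gain_const b < \<infinity>"
    by (simp_all add: moment_const_def envelope_const_def gain_const_def ennreal_mult_less_top
        power_less_top_ennreal)
qed

lemma nn_integral_abs_fst_power2_le_split:
  fixes X Y Z :: "real \<times> real \<Rightarrow> ennreal"
  assumes [measurable]: "Y \<in> borel_measurable borel" "Z \<in> borel_measurable borel"
    and le: "\<And>z. X z \<le> c * (Y z + Z z)"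
  shows "(\<integral>\<^sup>+z. (ennreal \<bar>fst z\<bar> * X z)\<^sup>2 \<partial>lborel)
     \<le> 2 * c\<^sup>2 * (\<integral>\<^sup>+z. (ennreal \<bar>fst z\<bar> * Y z)\<^sup>2 \<partial>lborel)
       + 2 * c\<^sup>2 * (\<integral>\<^sup>+z. (ennreal \<bar>fst z\<bar> * Z z)\<^sup>2 \<partial>lborel)"
proof -
  have "(ennreal \<bar>fst z\<bar> * X z)\<^sup>2
      \<le> 2 * c\<^sup>2 * (ennreal \<bar>fst z\<bar> * Y z)\<^sup>2 + 2 * c\<^sup>2 * (ennreal \<bar>fst z\<bar> * Z z)\<^sup>2" for z
  proof -
    have "ennreal \<bar>fst z\<bar> * X z \<le> ennreal \<bar>fst z\<bar> * (c * (Y z + Z z))"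
      by (rule mult_left_mono[OF le]) simp
    also have "\<dots> = c * (ennreal \<bar>fst z\<bar> * Y z + ennreal \<bar>fst z\<bar> * Z z)"
      by (simp add: algebra_simps)
    finally have "(ennreal \<bar>fst z\<bar> * X z)\<^sup>2 \<le> (c * (ennreal \<bar>fst z\<bar> * Y z + ennreal \<bar>fst z\<bar> * Z z))\<^sup>2"
      by (rule power_mono) simp
    also have "\<dots> = c\<^sup>2 * (ennreal \<bar>fst z\<bar> * Y z + ennreal \<bar>fst z\<bar> * Z z)\<^sup>2"
      by (rule power_mult_distrib)
    also have "\<dots> \<le> c\<^sup>2 * (2 * (ennreal \<bar>fst z\<bar> * Y z)\<^sup>2 + 2 * (ennreal \<bar>fst z\<bar> * Z z)\<^sup>2)"
      by (intro mult_left_mono ennreal_add_power2_le) simp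
    finally show ?thesis by (simp add: algebra_simps)
  qed
  then have "(\<integral>\<^sup>+z. (ennreal \<bar>fst z\<bar> * X z)\<^sup>2 \<partial>lborel)
      \<le> (\<integral>\<^sup>+z. 2 * c\<^sup>2 * (ennreal \<bar>fst z\<bar> * Y z)\<^sup>2 + 2 * c\<^sup>2 * (ennreal \<bar>fst z\<bar> * Z z)\<^sup>2 \<partial>lborel)"
    by (rule nn_integral_mono)
  also have "\<dots> = 2 * c\<^sup>2 * (\<integral>\<^sup>+z. (ennreal \<bar>fst z\<bar> * Y z)\<^sup>2 \<partial>lborel)
      + 2 * c\<^sup>2 * (\<integral>\<^sup>+z. (ennreal \<bar>fst z\<bar> * Z z)\<^sup>2 \<partial>lborel)"
    by (subst nn_integral_add) (auto simp: nn_integral_cmult)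
  finally show ?thesis .
qed

lemma conv_sobolev_weighted_conv_le:
  assumes [measurable]: "R \<in> borel_measurable borel" "F \<in> borel_measurable borel"
    "X \<in> borel_measurable borel" and "s \<ge> 0"
  shows "conv R (sobolev_weighted s (conv F X)) z
           \<le> ennreal (2 powr s) * (conv (conv R X) (sobolev_weighted s F) z
                                    + conv (conv R F) (sobolev_weighted s X) z)"
proof -
  have "conv R (sobolev_weighted s (conv F X)) z
      \<le> conv R (\<lambda>w. ennreal (2 powr s) * (conv (sobolev_weighted s F) X w + conv F (sobolev_weighted s X) w)) z"
    using sobolev_weighted_conv_le[OF assms(2,3,4)] by (intro conv_mono) auto
  also have "\<dots> = ennreal (2 powr s)
      * (conv R (conv (sobolev_weighted s F) X) z + conv R (conv F (sobolev_weighted s X)) z)"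
    by (simp add: conv_cmult_right conv_add_right)
  also have "conv R (conv (sobolev_weighted s F) X) = conv (conv R X) (sobolev_weighted s F)"
  proof -
    have "conv (sobolev_weighted s F) X = conv X (sobolev_weighted s F)"
      by (rule conv_commute) measurable
    moreover have "conv R (conv X (sobolev_weighted s F)) = conv (conv R X) (sobolev_weighted s F)"
      by (rule conv_assoc) measurable
    ultimately show ?thesis by simp
  qed
  also have "conv R (conv F (sobolev_weighted s X)) = conv (conv R F) (sobolev_weighted s X)"
    by (rule conv_assoc) measurable
  finally show ?thesis .
qed

lemma abs_fst_conv_sobolev_conv_list_le:
  assumes "b > 1/2" "s \<ge> 3 * b"
  shows "\<exists>K < \<infinity>. \<forall>R B F0 L. length L = n \<longrightarrow> (\<forall>F\<in>set (F0 # L). F \<in> borel_measurable borel)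
      \<longrightarrow> envelope_bound R B
      \<longrightarrow> (\<integral>\<^sup>+z. (ennreal \<bar>fst z\<bar> * conv R (sobolev_weighted s (conv_list (F0 # L))) z)\<^sup>2 \<partial>lborel)
            \<le> K * B * prod_list (map (Xnorm_sq s b) (F0 # L))"
proof (induction n)
  case 0
  have "(\<integral>\<^sup>+z. (ennreal \<bar>fst z\<bar> * conv R (sobolev_weighted s F0) z)\<^sup>2 \<partial>lborel)
      \<le> gain_const b * B * Xnorm_sq s b F0"
    if "F0 \<in> borel_measurable borel" "envelope_bound R B" for R B F0
    using abs_fst_conv_sobolev_weighted_le[OF that(2,1), of b s] assms by (simp add: mult_ac)
  then show ?case
    using bound_consts_finite[OF assms] by (intro exI[of _ "gain_const b"]) auto
next
  case (Suc n)
  obtain K where "K < \<infinity>" and IH: "\<And>R B F0 L. length L = n \<Longrightarrow> \<forall>F\<in>set (F0 # L). F \<in> borel_measurable borel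
      \<Longrightarrow> envelope_bound R B
      \<Longrightarrow> (\<integral>\<^sup>+z. (ennreal \<bar>fst z\<bar> * conv R (sobolev_weighted s (conv_list (F0 # L))) z)\<^sup>2 \<partial>lborel)
            \<le> K * B * prod_list (map (Xnorm_sq s b) (F0 # L))"
    using Suc.IH by blast
  let ?c = "ennreal (2 powr s)" and ?M = "moment_const s b" and ?N = "Xnorm_sq s b"
  define K' where "K' = 2 * ?c\<^sup>2 * (gain_const b * 16 * (16 * ?M) ^ n * ?M + K * 16 * ?M)"
  have "K' < \<infinity>"
    using \<open>K < \<infinity>\<close> bound_consts_finite[OF assms]
    by (simp add: K'_def ennreal_mult_less_top power_less_top_ennreal)
  moreover have "(\<integral>\<^sup>+z. (ennreal \<bar>fst z\<bar> * conv R (sobolev_weighted s (conv_list (F0 # L))) z)\<^sup>2 \<partial>lborel)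
      \<le> K' * B * prod_list (map ?N (F0 # L))"
    if len_L: "length L = Suc n" and meas: "\<forall>F\<in>set (F0 # L). F \<in> borel_measurable borel"
      and env: "envelope_bound R B" for R B F0 L
  proof -
    obtain G L' where L: "L = G # L'" and len: "length L' = n"
      using len_L by (cases L) auto
    have [measurable]: "F0 \<in> borel_measurable borel" "R \<in> borel_measurable borel"
      using meas env by (auto simp: envelope_bound_def moment_bound_def)
    define X where "X = conv_list (G # L')"
    have [measurable]: "X \<in> borel_measurable borel"
      unfolding X_def using meas L by (intro measurable_conv_list) auto
    let ?PX = "prod_list (map ?N (G # L'))"
    have "moment_bound X ((16 * ?M) ^ n * ?M * ?PX)"
      unfolding X_def using moment_bound_conv_list[of G L' s b] meas L len by auto
    moreover have "conv X R = conv R X"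
      by (rule conv_commute) measurable
    ultimately have env_RX: "envelope_bound (conv R X) (16 * B * ((16 * ?M) ^ n * ?M * ?PX))"
      using envelope_bound_conv[OF env] by metis
    have "conv F0 R = conv R F0"
      by (rule conv_commute) measurable
    then have env_RF: "envelope_bound (conv R F0) (16 * B * (?M * ?N F0))"
      using envelope_bound_conv[OF env moment_bound_Xnorm_sq] \<open>F0 \<in> borel_measurable borel\<close> by metis
    have "(\<integral>\<^sup>+z. (ennreal \<bar>fst z\<bar> * conv R (sobolev_weighted s (conv F0 X)) z)\<^sup>2 \<partial>lborel)
        \<le> 2 * ?c\<^sup>2 * (\<integral>\<^sup>+z. (ennreal \<bar>fst z\<bar> * conv (conv R X) (sobolev_weighted s F0) z)\<^sup>2 \<partial>lborel)
          + 2 * ?c\<^sup>2 * (\<integral>\<^sup>+z. (ennreal \<bar>fst z\<bar> * conv (conv R F0) (sobolev_weighted s X) z)\<^sup>2 \<partial>lborel)"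
      using assms by (intro nn_integral_abs_fst_power2_le_split conv_sobolev_weighted_conv_le) auto
    also have "\<dots> \<le> 2 * ?c\<^sup>2 * (gain_const b * ?N F0 * (16 * B * ((16 * ?M) ^ n * ?M * ?PX)))
          + 2 * ?c\<^sup>2 * (K * (16 * B * (?M * ?N F0)) * ?PX)"
      using abs_fst_conv_sobolev_weighted_le[OF env_RX, of F0 b s]
        IH[OF len _ env_RF, of G] meas L assms
      by (intro add_mono mult_left_mono) (auto simp: X_def)
    also have "\<dots> = K' * B * prod_list (map ?N (F0 # L))"
      by (simp add: K'_def L algebra_simps)
    finally show ?thesis
      by (simp add: L X_def)
  qed
  ultimately show ?case by blast
qed

lemma abs_fst_sobolev_conv_list_le:
  assumes "b > 1/2" "s \<ge> 3 * b"
  shows "\<exists>K < \<infinity>. \<forall>L. length L = n + 3 \<longrightarrow> (\<forall>F\<in>set L. F \<in> borel_measurable borel)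
      \<longrightarrow> (\<integral>\<^sup>+z. (ennreal \<bar>fst z\<bar> * sobolev_weighted s (conv_list L) z)\<^sup>2 \<partial>lborel)
            \<le> K * prod_list (map (Xnorm_sq s b) L)"
proof -
  obtain KV where "KV < \<infinity>" and V: "\<And>R B F0 L. length L = n \<Longrightarrow> \<forall>F\<in>set (F0 # L). F \<in> borel_measurable borel
      \<Longrightarrow> envelope_bound R B
      \<Longrightarrow> (\<integral>\<^sup>+z. (ennreal \<bar>fst z\<bar> * conv R (sobolev_weighted s (conv_list (F0 # L))) z)\<^sup>2 \<partial>lborel)
            \<le> KV * B * prod_list (map (Xnorm_sq s b) (F0 # L))"
    using abs_fst_conv_sobolev_conv_list_le[OF assms, of n] by blast
  let ?c = "ennreal (2 powr s)" and ?N = "Xnorm_sq s b"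
  let ?E = "(16 * moment_const s b) ^ n * envelope_const s b"
  define K where "K = 2 * ?c\<^sup>2 * (gain_const b * ?E)
    + 2 * ?c\<^sup>2 * (2 * ?c\<^sup>2 * (gain_const b * ?E) + 2 * ?c\<^sup>2 * (KV * envelope_const s b))"
  have "K < \<infinity>"
    using \<open>KV < \<infinity>\<close> bound_consts_finite[OF assms]
    by (simp add: K_def ennreal_mult_less_top power_less_top_ennreal)
  moreover have "(\<integral>\<^sup>+z. (ennreal \<bar>fst z\<bar> * sobolev_weighted s (conv_list L) z)\<^sup>2 \<partial>lborel)
      \<le> K * prod_list (map ?N L)"
    if len_L: "length L = n + 3" and meas: "\<forall>F\<in>set L. F \<in> borel_measurable borel" for L
  proof -
    obtain F0 F1 F2 L' where L: "L = F0 # F1 # F2 # L'" and len: "length L' = n"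
      using len_L by (auto simp: numeral_3_eq_3 length_Suc_conv)
    have s: "s \<ge> 0" "b \<ge> 0" using assms by auto
    have [measurable]: "F0 \<in> borel_measurable borel" "F1 \<in> borel_measurable borel"
      using meas L by auto
    define Y where "Y = conv_list (F2 # L')"
    have [measurable]: "Y \<in> borel_measurable borel"
      unfolding Y_def using meas L by (intro measurable_conv_list) auto
    have env_X: "envelope_bound (conv F1 Y) (?E * prod_list (map ?N (F1 # F2 # L')))"
      using envelope_bound_conv_list[of F1 F2 L' b s] meas L len s assms by (simp add: Y_def)
    have env_0Y: "envelope_bound (conv F0 Y) (?E * prod_list (map ?N (F0 # F2 # L')))"
      using envelope_bound_conv_list[of F0 F2 L' b s] meas L len s assms by (simp add: Y_def)
    have env_01: "envelope_bound (conv F0 F1) (envelope_const s b * ?N F0 * ?N F1)"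
      using envelope_bound_conv_Xnorm_sq[of F0 F1 b s] s assms by simp
    have "(\<integral>\<^sup>+z. (ennreal \<bar>fst z\<bar> * conv F0 (sobolev_weighted s (conv F1 Y)) z)\<^sup>2 \<partial>lborel)
        \<le> 2 * ?c\<^sup>2 * (\<integral>\<^sup>+z. (ennreal \<bar>fst z\<bar> * conv (conv F0 Y) (sobolev_weighted s F1) z)\<^sup>2 \<partial>lborel)
          + 2 * ?c\<^sup>2 * (\<integral>\<^sup>+z. (ennreal \<bar>fst z\<bar> * conv (conv F0 F1) (sobolev_weighted s Y) z)\<^sup>2 \<partial>lborel)"
      using s by (intro nn_integral_abs_fst_power2_le_split conv_sobolev_weighted_conv_le) auto
    also have "\<dots> \<le> 2 * ?c\<^sup>2 * (gain_const b * ?N F1 * (?E * prod_list (map ?N (F0 # F2 # L'))))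
          + 2 * ?c\<^sup>2 * (KV * (envelope_const s b * ?N F0 * ?N F1) * prod_list (map ?N (F2 # L')))"
      using abs_fst_conv_sobolev_weighted_le[OF env_0Y, of F1 b s] V[OF len _ env_01, of F2] meas L s
      by (intro add_mono mult_left_mono) (auto simp: Y_def)
    finally have inner: "(\<integral>\<^sup>+z. (ennreal \<bar>fst z\<bar> * conv F0 (sobolev_weighted s (conv F1 Y)) z)\<^sup>2 \<partial>lborel)
        \<le> 2 * ?c\<^sup>2 * (gain_const b * ?N F1 * (?E * prod_list (map ?N (F0 # F2 # L'))))
          + 2 * ?c\<^sup>2 * (KV * (envelope_const s b * ?N F0 * ?N F1) * prod_list (map ?N (F2 # L')))" .
    have outer: "sobolev_weighted s (conv F0 (conv F1 Y)) z
        \<le> ?c * (conv (conv F1 Y) (sobolev_weighted s F0) z + conv F0 (sobolev_weighted s (conv F1 Y)) z)" for z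
      using sobolev_weighted_conv_le[of F0 "conv F1 Y" s z] s
        conv_commute[of "sobolev_weighted s F0" "conv F1 Y"] by simp
    have "(\<integral>\<^sup>+z. (ennreal \<bar>fst z\<bar> * sobolev_weighted s (conv_list L) z)\<^sup>2 \<partial>lborel)
        \<le> 2 * ?c\<^sup>2 * (\<integral>\<^sup>+z. (ennreal \<bar>fst z\<bar> * conv (conv F1 Y) (sobolev_weighted s F0) z)\<^sup>2 \<partial>lborel)
          + 2 * ?c\<^sup>2 * (\<integral>\<^sup>+z. (ennreal \<bar>fst z\<bar> * conv F0 (sobolev_weighted s (conv F1 Y)) z)\<^sup>2 \<partial>lborel)"
      unfolding L Y_def[symmetric] conv_list.simps
      by (rule nn_integral_abs_fst_power2_le_split[OF _ _ outer]) measurable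
    also have "\<dots> \<le> 2 * ?c\<^sup>2 * (gain_const b * ?N F0 * (?E * prod_list (map ?N (F1 # F2 # L'))))
          + 2 * ?c\<^sup>2 * (2 * ?c\<^sup>2 * (gain_const b * ?N F1 * (?E * prod_list (map ?N (F0 # F2 # L'))))
          + 2 * ?c\<^sup>2 * (KV * (envelope_const s b * ?N F0 * ?N F1) * prod_list (map ?N (F2 # L'))))"
      using abs_fst_conv_sobolev_weighted_le[OF env_X, of F0 b s] inner s
      by (intro add_mono mult_left_mono) auto
    also have "\<dots> = K * prod_list (map ?N L)"
      by (simp add: K_def L algebra_simps)
    finally show ?thesis .
  qed
  ultimately show ?thesis by blast
qed

section \<open>Back to Fourier transforms\<close>

definition amplitude :: "(real \<times> real \<Rightarrow> complex) \<Rightarrow> real \<times> real \<Rightarrow> ennreal" where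
  "amplitude f z = ennreal (cmod (f z))"

lemma measurable_amplitude [measurable]:
  assumes [measurable]: "f \<in> borel_measurable borel"
  shows "amplitude f \<in> borel_measurable borel"
  unfolding amplitude_def[abs_def] by measurable

lemma amplitude_fconv_le:
  assumes "\<And>z. amplitude g z \<le> H z"
  shows "amplitude (fconv f g) z \<le> conv (amplitude f) H z"
proof -
  have "cmod (fconv f g z) = \<bar>1 / (2 * pi)\<^sup>2\<bar> * cmod (LINT w|lborel. f w * g (z - w))"
    unfolding fconv_def by (simp only: norm_mult norm_of_real)
  also have "\<dots> \<le> cmod (LINT w|lborel. f w * g (z - w))"
  proof (rule mult_left_le_one_le)
    have "1 \<le> (2 * pi)\<^sup>2"
      using pi_gt3 by (intro one_le_power) simp
    then show "\<bar>1 / (2 * pi)\<^sup>2\<bar> \<le> 1" by simp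
  qed simp_all
  finally have "amplitude (fconv f g) z \<le> ennreal (cmod (LINT w|lborel. f w * g (z - w)))"
    unfolding amplitude_def by (rule ennreal_leI)
  also have "\<dots> \<le> (\<integral>\<^sup>+w. ennreal (cmod (f w * g (z - w))) \<partial>lborel)"
    by (cases "integrable lborel (\<lambda>w. f w * g (z - w))")
       (simp_all add: integral_norm_bound_ennreal not_integrable_integral_eq)
  also have "\<dots> \<le> conv (amplitude f) H z"
    unfolding conv_def using assms
    by (intro nn_integral_mono) (simp add: amplitude_def norm_mult ennreal_mult mult_left_mono)
  finally show ?thesis .
qed

lemma amplitude_fprod_le: "fs \<noteq> [] \<Longrightarrow> amplitude (fprod fs) z \<le> conv_list (map amplitude fs) z"
  by (induction fs arbitrary: z rule: fprod.induct) (auto intro: amplitude_fconv_le)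

definition analytic_weight :: "real \<Rightarrow> real \<times> real \<Rightarrow> ennreal" where
  "analytic_weight \<rho> z = ennreal (exp (\<rho> * bracket (fst z)))"

lemma measurable_analytic_weight [measurable]: "analytic_weight \<rho> \<in> borel_measurable borel"
  unfolding analytic_weight_def[abs_def] by measurable

lemma analytic_weight_add_le:
  assumes "\<rho> \<ge> 0"
  shows "analytic_weight \<rho> (w + u) \<le> analytic_weight \<rho> w * analytic_weight \<rho> u"
proof -
  have "\<rho> * bracket (fst (w + u)) \<le> \<rho> * bracket (fst w) + \<rho> * bracket (fst u)"
    using mult_left_mono[OF bracket_add_le assms] by (simp add: distrib_left)
  then show ?thesis
    unfolding analytic_weight_def by (simp add: ennreal_mult'[symmetric] exp_add[symmetric])
qed

lemma analytic_weight_mult_conv_list_le: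
  assumes "\<rho> \<ge> 0" "\<forall>F\<in>set Fs. F \<in> borel_measurable borel"
  shows "analytic_weight \<rho> z * conv_list Fs z \<le> conv_list (map (\<lambda>F w. analytic_weight \<rho> w * F w) Fs) z"
  using assms(2)
proof (induction Fs arbitrary: z rule: conv_list.induct)
  case (3 F G Fs)
  let ?X = "conv_list (G # Fs)"
  have [measurable]: "F \<in> borel_measurable borel" "?X \<in> borel_measurable borel"
    using "3.prems" by (auto intro!: measurable_conv_list)
  have "analytic_weight \<rho> z * conv F ?X z
      = (\<integral>\<^sup>+w. analytic_weight \<rho> z * (F w * ?X (z - w)) \<partial>lborel)"
    unfolding conv_def by (rule nn_integral_cmult[symmetric]) measurable
  also have "\<dots> \<le> conv (\<lambda>w. analytic_weight \<rho> w * F w) (\<lambda>w. analytic_weight \<rho> w * ?X w) z"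
    unfolding conv_def
  proof (rule nn_integral_mono)
    fix w
    have "analytic_weight \<rho> z \<le> analytic_weight \<rho> w * analytic_weight \<rho> (z - w)"
      using analytic_weight_add_le[OF assms(1), of w "z - w"] by simp
    then have "analytic_weight \<rho> z * (F w * ?X (z - w))
        \<le> (analytic_weight \<rho> w * analytic_weight \<rho> (z - w)) * (F w * ?X (z - w))"
      by (rule mult_right_mono) simp
    then show "analytic_weight \<rho> z * (F w * ?X (z - w))
        \<le> analytic_weight \<rho> w * F w * (analytic_weight \<rho> (z - w) * ?X (z - w))"
      by (simp add: mult_ac)
  qed
  also have "\<dots> \<le> conv (\<lambda>w. analytic_weight \<rho> w * F w) (conv_list (map (\<lambda>F w. analytic_weight \<rho> w * F w) (G # Fs))) z"
    using 3 by (intro conv_mono) auto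
  finally show ?case by simp
qed auto

lemma sqrt_Xnorm_sq_analytic_weight:
  "ennsqrt (Xnorm_sq s b (\<lambda>w. analytic_weight \<rho> w * amplitude f w)) = Xnorm \<rho> s b f"
proof -
  have "(ennreal (xweight s b z) * (analytic_weight \<rho> z * amplitude f z))\<^sup>2
      = ennreal ((bweight \<rho> s b z * cmod (f z))\<^sup>2)" for z
  proof -
    have "ennreal (xweight s b z) * (analytic_weight \<rho> z * amplitude f z) = ennreal (bweight \<rho> s b z * cmod (f z))"
      unfolding xweight_def bweight_def analytic_weight_def amplitude_def bracket_def
      by (simp add: ennreal_mult'[symmetric] mult_ac)
    moreover have "0 \<le> bweight \<rho> s b z * cmod (f z)"
      by (simp add: bweight_def)
    ultimately show ?thesis by (simp add: ennreal_power)
  qed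
  then show ?thesis
    unfolding Xnorm_sq_def Xnorm_def by simp
qed

lemma bweight_dx_fprod_le:
  assumes "\<rho> \<ge> 0" "b' \<le> 0" "fs \<noteq> []" "\<forall>f\<in>set fs. f \<in> borel_measurable borel"
  shows "ennreal (bweight \<rho> s b' z * cmod (dx_hat (fprod fs) z))
    \<le> ennreal \<bar>fst z\<bar> * sobolev_weighted s (conv_list (map (\<lambda>f w. analytic_weight \<rho> w * amplitude f w) fs)) z"
proof -
  have "bracket (snd z - fst z ^ 3) powr b' \<le> 1"
    using powr_mono[of b' 0 "bracket (snd z - fst z ^ 3)"] assms(2) by simp
  then have "(1 + \<bar>snd z - fst z ^ 3\<bar>) powr b' \<le> 1"
    by (simp add: bracket_def)
  then have "bweight \<rho> s b' z * cmod (dx_hat (fprod fs) z)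
      \<le> \<bar>fst z\<bar> * (bracket (fst z) powr s * (exp (\<rho> * bracket (fst z)) * cmod (fprod fs z)))"
    unfolding bweight_def dx_hat_def bracket_def
    by (simp add: norm_mult mult_ac) (intro mult_left_mono mult_left_le; simp)
  then have "ennreal (bweight \<rho> s b' z * cmod (dx_hat (fprod fs) z))
      \<le> ennreal \<bar>fst z\<bar> * sobolev_weighted s (\<lambda>w. analytic_weight \<rho> w * amplitude (fprod fs) w) z"
    by (simp add: sobolev_weighted_def analytic_weight_def amplitude_def ennreal_mult'[symmetric] ennreal_leI)
  also have "\<dots> \<le> ennreal \<bar>fst z\<bar> * sobolev_weighted s (\<lambda>w. analytic_weight \<rho> w * conv_list (map amplitude fs) w) z"
    using amplitude_fprod_le[OF assms(3)]
    by (simp add: sobolev_weighted_def mult_left_mono)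
  also have "\<dots> \<le> ennreal \<bar>fst z\<bar> * sobolev_weighted s (conv_list (map (\<lambda>f w. analytic_weight \<rho> w * amplitude f w) fs)) z"
  proof -
    have "analytic_weight \<rho> z * conv_list (map amplitude fs) z
        \<le> conv_list (map (\<lambda>f w. analytic_weight \<rho> w * amplitude f w) fs) z"
      using analytic_weight_mult_conv_list_le[OF assms(1), of "map amplitude fs" z] assms(4)
      by (auto simp: comp_def intro: measurable_amplitude)
    then show ?thesis
      unfolding sobolev_weighted_def by (intro mult_left_mono) simp_all
  qed
  finally show ?thesis .
qed

lemma Xnorm_dx_fprod_le:
  assumes "\<rho> \<ge> 0" "b > 1/2" "s \<ge> 3 * b" "b' \<le> 0"
  shows "\<exists>K < \<infinity>. \<forall>fs. length fs = n + 3 \<longrightarrow> (\<forall>f\<in>set fs. f \<in> borel_measurable borel)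
      \<longrightarrow> Xnorm \<rho> s b' (dx_hat (fprod fs)) \<le> K * prod_list (map (Xnorm \<rho> s b) fs)"
proof -
  obtain K where "K < \<infinity>" and K: "\<And>L. length L = n + 3 \<Longrightarrow> \<forall>F\<in>set L. F \<in> borel_measurable borel
      \<Longrightarrow> (\<integral>\<^sup>+z. (ennreal \<bar>fst z\<bar> * sobolev_weighted s (conv_list L) z)\<^sup>2 \<partial>lborel)
            \<le> K * prod_list (map (Xnorm_sq s b) L)"
    using abs_fst_sobolev_conv_list_le[OF assms(2,3), of n] by blast
  have "Xnorm \<rho> s b' (dx_hat (fprod fs)) \<le> ennsqrt K * prod_list (map (Xnorm \<rho> s b) fs)"
    if "length fs = n + 3" and meas: "\<forall>f\<in>set fs. f \<in> borel_measurable borel" for fs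
  proof -
    let ?Fs = "map (\<lambda>f w. analytic_weight \<rho> w * amplitude f w) fs"
    have "fs \<noteq> []" using that(1) by auto
    have "Xnorm \<rho> s b' (dx_hat (fprod fs))
        \<le> ennsqrt (\<integral>\<^sup>+z. (ennreal \<bar>fst z\<bar> * sobolev_weighted s (conv_list ?Fs) z)\<^sup>2 \<partial>lborel)"
      unfolding Xnorm_def
    proof (intro ennsqrt_mono nn_integral_mono)
      fix z
      have "0 \<le> bweight \<rho> s b' z * cmod (dx_hat (fprod fs) z)"
        by (simp add: bweight_def)
      then have "ennreal ((bweight \<rho> s b' z * cmod (dx_hat (fprod fs) z))\<^sup>2)
          = (ennreal (bweight \<rho> s b' z * cmod (dx_hat (fprod fs) z)))\<^sup>2"
        by (simp add: ennreal_power)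
      also have "\<dots> \<le> (ennreal \<bar>fst z\<bar> * sobolev_weighted s (conv_list ?Fs) z)\<^sup>2"
        using bweight_dx_fprod_le[OF assms(1,4) \<open>fs \<noteq> []\<close> meas] by (rule power_mono) simp
      finally show "ennreal ((bweight \<rho> s b' z * cmod (dx_hat (fprod fs) z))\<^sup>2)
          \<le> (ennreal \<bar>fst z\<bar> * sobolev_weighted s (conv_list ?Fs) z)\<^sup>2" .
    qed
    also have "\<dots> \<le> ennsqrt (K * prod_list (map (Xnorm_sq s b) ?Fs))"
      using meas that(1) by (intro ennsqrt_mono K) auto
    also have "\<dots> = ennsqrt K * prod_list (map (Xnorm \<rho> s b) fs)"
      by (simp add: ennsqrt_mult ennsqrt_prod_list comp_def sqrt_Xnorm_sq_analytic_weight)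
    finally show ?thesis .
  qed
  then show ?thesis
    using ennsqrt_less_top[OF \<open>K < \<infinity>\<close>] by blast
qed

lemma prod_list_map_upt_eq_prod:
  "prod_list (map g [1..<n + 1]) = (\<Prod>i\<in>{1..n}. g i)"
  by (subst prod.distinct_set_conv_list[symmetric]) (auto intro: prod.cong)

theorem lemma3p6:
  fixes \<rho> s b b' :: real and p :: nat
  assumes "\<rho> > 0" and "b > 1/2" and "b' < - 1/4" and "s \<ge> 3 * b" and "p \<ge> 1"
  shows "\<exists>C c :: real. \<forall>uh vh :: nat \<Rightarrow> real \<times> real \<Rightarrow> complex.
     (\<forall>i\<in>{1..p+1}. inX \<rho> s b (uh i)) \<and> (\<forall>j\<in>{1..p+1}. inX \<rho> s b (vh j)) \<longrightarrow>
       Xnorm \<rho> s b' (dx_hat (fprod (map uh [1..<p+1] @ map vh [1..<p+2])))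
         \<le> ennreal C * (\<Prod>i\<in>{1..p}. Xnorm 0 s b (uh i)) * (\<Prod>j\<in>{1..p+1}. Xnorm 0 s b (vh j))
           + ennreal c * (\<Prod>i\<in>{1..p}. Xnorm \<rho> s b (uh i)) * (\<Prod>j\<in>{1..p+1}. Xnorm \<rho> s b (vh j))
     \<and> Xnorm \<rho> s b' (dx_hat (fprod (map uh [1..<p+2] @ map vh [1..<p+1])))
         \<le> ennreal C * (\<Prod>i\<in>{1..p+1}. Xnorm 0 s b (uh i)) * (\<Prod>j\<in>{1..p}. Xnorm 0 s b (vh j))
           + ennreal c * (\<Prod>i\<in>{1..p+1}. Xnorm \<rho> s b (uh i)) * (\<Prod>j\<in>{1..p}. Xnorm \<rho> s b (vh j))"
proof -
  obtain K where "K < \<infinity>" and K: "\<And>fs. length fs = (2 * p - 2) + 3 \<Longrightarrow> \<forall>f\<in>set fs. f \<in> borel_measurable borel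
      \<Longrightarrow> Xnorm \<rho> s b' (dx_hat (fprod fs)) \<le> K * prod_list (map (Xnorm \<rho> s b) fs)"
    using Xnorm_dx_fprod_le[of \<rho> b s b' "2 * p - 2"] assms by auto
  have bound: "Xnorm \<rho> s b' (dx_hat (fprod (map uh [1..<m+1] @ map vh [1..<k+1])))
      \<le> ennreal (enn2real K) * (\<Prod>i\<in>{1..m}. Xnorm \<rho> s b (uh i)) * (\<Prod>j\<in>{1..k}. Xnorm \<rho> s b (vh j))"
    if "m + k = 2 * p + 1" "\<forall>i\<in>{1..p+1}. inX \<rho> s b (uh i)" "\<forall>j\<in>{1..p+1}. inX \<rho> s b (vh j)"
      "m \<le> p + 1" "k \<le> p + 1" for uh vh m k
  proof -
    let ?fs = "map uh [1..<m+1] @ map vh [1..<k+1]"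
    have "Xnorm \<rho> s b' (dx_hat (fprod ?fs)) \<le> K * prod_list (map (Xnorm \<rho> s b) ?fs)"
      using that assms(5) by (intro K) (auto simp: inX_def)
    also have "prod_list (map (Xnorm \<rho> s b) ?fs)
        = (\<Prod>i\<in>{1..m}. Xnorm \<rho> s b (uh i)) * (\<Prod>j\<in>{1..k}. Xnorm \<rho> s b (vh j))"
      unfolding map_append prod_list.append map_map prod_list_map_upt_eq_prod comp_apply ..
    also have "K = ennreal (enn2real K)"
      using \<open>K < \<infinity>\<close> by simp
    finally show ?thesis
      by (simp only: mult.assoc)
  qed
  show ?thesis
    using bound[of p "p + 1"] bound[of "p + 1" p] by (intro exI[of _ 0] exI[of _ "enn2real K"]) auto
qed

end
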